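(* Let $\lambda\in K$ be invertible and $T=\{D(x)D(y)+\lambda^{-1}D(x)y+\lambda^{-1}xD(y)-\lambda^{-1}D(xy)\mid x,y\in\mathfrak{S}(X)\}$. Then $K\langle X;D|T\rangle=K\langle X;D\rangle/Id(T)$ is a free $\lambda$-differential algebra on the set $X$ with $K$-basis $\Phi(X)$.
   Context: $K$ is a commutative ring with unit. A $\lambda$-differential algebra is an associative $K$-algebra $R$ with a $K$-linear $D:R\to R$ satisfying $D(xy)=D(x)y+xD(y)+\lambda D(x)D(y)$; free on $X$ means every map from $X$ to such an algebra extends uniquely to a homomorphism commuting with $D$. $S(Y)$ free semigroup; $\mathfrak{S}_0=S(X)$, $\mathfrak{S}_n=S(X\cup\{D(u)\mid u\in\mathfrak{S}_{n-1}\})$, $\mathfrak{S}(X)=\bigcup_n\mathfrak{S}_n$; $K\langle X;D\rangle$ free $K$-module on $\mathfrak{S}(X)$ with concatenation product and $D$ extended linearly; $Id(T)$ is the $K$-span of all $u|_t$, $u$ a word on $X\cup\{\star\}$ with exactly one $\star$, $t\in T$ substituted for $\star$. For $Y,Z\subseteq\mathfrak{S}(X)$: $\Lambda^D_X(Y,Z)=\bigcup_{r\ge1}(YD(Z))^r\cup\bigcup_{r\ge0}(YD(Z))^rY\cup\bigcup_{r\ge1}(D(Z)Y)^r\cup\bigcup_{r\ge0}(D(Z)Y)^rD(Z)$; $\Phi_0=S(X)$, $\Phi_n=\Lambda^D_X(\Phi_0,\Phi_{n-1})$, $\Phi(X)=\bigcup_{n\ge0}\Phi_n$. *)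

theory Defs
  imports Main
begin

text \<open>A letter is either a generator x or a bracketed word D(u).
  A bracketed word is a nonempty list of letters.\<close>

datatype 'x letter = Lx 'x | LD "'x letter list"

fun wfl :: "'x set \<Rightarrow> 'x letter \<Rightarrow> bool" where
  "wfl X (Lx x) = (x \<in> X)"
| "wfl X (LD w) = (w \<noteq> [] \<and> list_all (wfl X) w)"

text \<open>frakS(X) = union of all frakS_n.\<close>
definition frakS :: "'x set \<Rightarrow> 'x letter list set" where
  "frakS X = {w. w \<noteq> [] \<and> list_all (wfl X) w}"

text \<open>The free semigroup S(X), as words of plain generators.\<close>
definition Sg :: "'x set \<Rightarrow> 'x letter list set" where
  "Sg X = {w. w \<noteq> [] \<and> set w \<subseteq> Lx ` X}"

section \<open>The free module K<X;D> on frakS(X)\<close>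

type_synonym ('x, 'k) poly = "'x letter list \<Rightarrow> 'k"

definition KXD :: "'x set \<Rightarrow> ('x, 'k::zero) poly set" where
  "KXD X = {p. finite {w. p w \<noteq> 0} \<and> (\<forall>w. p w \<noteq> 0 \<longrightarrow> w \<in> frakS X)}"

definition pzero :: "('x, 'k::zero) poly" where
  "pzero = (\<lambda>_. 0)"

definition padd :: "('x, 'k::plus) poly \<Rightarrow> ('x, 'k) poly \<Rightarrow> ('x, 'k) poly" where
  "padd p q = (\<lambda>w. p w + q w)"

definition psub :: "('x, 'k::minus) poly \<Rightarrow> ('x, 'k) poly \<Rightarrow> ('x, 'k) poly" where
  "psub p q = (\<lambda>w. p w - q w)"

definition psmul :: "'k::times \<Rightarrow> ('x, 'k) poly \<Rightarrow> ('x, 'k) poly" where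
  "psmul k p = (\<lambda>w. k * p w)"

definition pmul :: "('x, 'k::comm_semiring_1) poly \<Rightarrow> ('x, 'k) poly \<Rightarrow> ('x, 'k) poly" where
  "pmul p q = (\<lambda>w. \<Sum>i\<in>{0..length w}. p (take i w) * q (drop i w))"

fun unD :: "'x letter list \<Rightarrow> 'x letter list option" where
  "unD [LD u] = Some u"
| "unD _ = None"

text \<open>The operator D, extended linearly: D(u) is the one-letter word [LD u].\<close>
definition pD :: "('x, 'k::zero) poly \<Rightarrow> ('x, 'k) poly" where
  "pD p = (\<lambda>w. case unD w of Some u \<Rightarrow> p u | None \<Rightarrow> 0)"

definition pmono :: "'x letter list \<Rightarrow> ('x, 'k::zero_neq_one) poly" where
  "pmono w = (\<lambda>v. if v = w then 1 else 0)"

section \<open>The set T and the operated ideal Id(T)\<close>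

text \<open>T, with mu playing the role of lambda^{-1}.\<close>
definition Tset :: "'x set \<Rightarrow> 'k::comm_ring_1 \<Rightarrow> ('x, 'k) poly set" where
  "Tset X mu = {psub (padd (padd (pmul (pD (pmono x)) (pD (pmono y)))
                                  (psmul mu (pmul (pD (pmono x)) (pmono y))))
                            (psmul mu (pmul (pmono x) (pD (pmono y)))))
                      (psmul mu (pD (pmul (pmono x) (pmono y))))
               | x y. x \<in> frakS X \<and> y \<in> frakS X}"

fun prodl :: "('x, 'k::comm_semiring_1) poly list \<Rightarrow> ('x, 'k) poly" where
  "prodl [] = pzero"
| "prodl [p] = p"
| "prodl (p # q # ps) = pmul p (prodl (q # ps))"

text \<open>Words on X \<union> {star}: the letter Lx None is the star.
  subst_letter t replaces the star by t (extended multilinearly).\<close>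
fun subst_letter :: "('x, 'k::comm_ring_1) poly \<Rightarrow> 'x option letter \<Rightarrow> ('x, 'k) poly" where
  "subst_letter t (Lx None) = t"
| "subst_letter t (Lx (Some x)) = pmono [Lx x]"
| "subst_letter t (LD w) = pD (prodl (map (subst_letter t) w))"

definition subst_word :: "('x, 'k::comm_ring_1) poly \<Rightarrow> 'x option letter list \<Rightarrow> ('x, 'k) poly" where
  "subst_word t u = prodl (map (subst_letter t) u)"

fun nstar :: "'x option letter \<Rightarrow> nat" where
  "nstar (Lx None) = 1"
| "nstar (Lx (Some x)) = 0"
| "nstar (LD w) = sum_list (map nstar w)"

definition nstar_word :: "'x option letter list \<Rightarrow> nat" where
  "nstar_word u = sum_list (map nstar u)"

inductive_set kspan :: "('x, 'k::comm_ring_1) poly set \<Rightarrow> ('x, 'k) poly set" for S where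
  kspan_zero: "pzero \<in> kspan S"
| kspan_step: "p \<in> S \<Longrightarrow> q \<in> kspan S \<Longrightarrow> padd (psmul k p) q \<in> kspan S"

definition IdT :: "'x set \<Rightarrow> ('x, 'k::comm_ring_1) poly set \<Rightarrow> ('x, 'k) poly set" where
  "IdT X T = kspan {subst_word t u | u t.
                     u \<in> frakS (insert None (Some ` X)) \<and> nstar_word u = 1 \<and> t \<in> T}"

definition catset :: "'a list set \<Rightarrow> 'a list set \<Rightarrow> 'a list set" where
  "catset A B = {a @ b | a b. a \<in> A \<and> b \<in> B}"

fun setpow :: "'a list set \<Rightarrow> nat \<Rightarrow> 'a list set" where
  "setpow A 0 = {[]}"
| "setpow A (Suc n) = catset A (setpow A n)"

definition DZ :: "'x letter list set \<Rightarrow> 'x letter list set" where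
  "DZ Z = {[LD z] | z. z \<in> Z}"

definition LambdaD :: "'x letter list set \<Rightarrow> 'x letter list set \<Rightarrow> 'x letter list set" where
  "LambdaD Y Z =
     (\<Union>r\<in>{1..}. setpow (catset Y (DZ Z)) r)
   \<union> (\<Union>r. catset (setpow (catset Y (DZ Z)) r) Y)
   \<union> (\<Union>r\<in>{1..}. setpow (catset (DZ Z) Y) r)
   \<union> (\<Union>r. catset (setpow (catset (DZ Z) Y) r) (DZ Z))"

fun PhiN :: "'x set \<Rightarrow> nat \<Rightarrow> 'x letter list set" where
  "PhiN X 0 = Sg X"
| "PhiN X (Suc n) = LambdaD (Sg X) (PhiN X n)"

definition Phi :: "'x set \<Rightarrow> 'x letter list set" where
  "Phi X = (\<Union>n. PhiN X n)"

section \<open>Lambda-differential algebras (associative, not necessarily unital)\<close>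

record ('k, 'a) kdalg =
  carrier :: "'a set"
  add :: "'a \<Rightarrow> 'a \<Rightarrow> 'a"
  zero :: 'a
  mult :: "'a \<Rightarrow> 'a \<Rightarrow> 'a"
  smul :: "'k \<Rightarrow> 'a \<Rightarrow> 'a"
  der :: "'a \<Rightarrow> 'a"

definition kalgebra :: "('k::comm_ring_1, 'a) kdalg \<Rightarrow> bool" where
  "kalgebra A \<longleftrightarrow>
     zero A \<in> carrier A
   \<and> (\<forall>a\<in>carrier A. \<forall>b\<in>carrier A. add A a b \<in> carrier A)
   \<and> (\<forall>a\<in>carrier A. \<forall>b\<in>carrier A. mult A a b \<in> carrier A)
   \<and> (\<forall>k. \<forall>a\<in>carrier A. smul A k a \<in> carrier A)
   \<and> (\<forall>a\<in>carrier A. \<forall>b\<in>carrier A. \<forall>c\<in>carrier A. add A (add A a b) c = add A a (add A b c))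
   \<and> (\<forall>a\<in>carrier A. \<forall>b\<in>carrier A. add A a b = add A b a)
   \<and> (\<forall>a\<in>carrier A. add A (zero A) a = a)
   \<and> (\<forall>a\<in>carrier A. \<exists>b\<in>carrier A. add A a b = zero A)
   \<and> (\<forall>k. \<forall>a\<in>carrier A. \<forall>b\<in>carrier A. smul A k (add A a b) = add A (smul A k a) (smul A k b))
   \<and> (\<forall>k l. \<forall>a\<in>carrier A. smul A (k + l) a = add A (smul A k a) (smul A l a))
   \<and> (\<forall>k l. \<forall>a\<in>carrier A. smul A (k * l) a = smul A k (smul A l a))
   \<and> (\<forall>a\<in>carrier A. smul A 1 a = a)
   \<and> (\<forall>a\<in>carrier A. \<forall>b\<in>carrier A. \<forall>c\<in>carrier A. mult A (mult A a b) c = mult A a (mult A b c))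
   \<and> (\<forall>a\<in>carrier A. \<forall>b\<in>carrier A. \<forall>c\<in>carrier A. mult A a (add A b c) = add A (mult A a b) (mult A a c))
   \<and> (\<forall>a\<in>carrier A. \<forall>b\<in>carrier A. \<forall>c\<in>carrier A. mult A (add A a b) c = add A (mult A a c) (mult A b c))
   \<and> (\<forall>k. \<forall>a\<in>carrier A. \<forall>b\<in>carrier A. smul A k (mult A a b) = mult A (smul A k a) b)
   \<and> (\<forall>k. \<forall>a\<in>carrier A. \<forall>b\<in>carrier A. smul A k (mult A a b) = mult A a (smul A k b))"

definition lambda_diff_alg :: "'k::comm_ring_1 \<Rightarrow> ('k, 'a) kdalg \<Rightarrow> bool" where
  "lambda_diff_alg lam A \<longleftrightarrow>
     kalgebra A
   \<and> (\<forall>a\<in>carrier A. der A a \<in> carrier A)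
   \<and> (\<forall>a\<in>carrier A. \<forall>b\<in>carrier A. der A (add A a b) = add A (der A a) (der A b))
   \<and> (\<forall>k. \<forall>a\<in>carrier A. der A (smul A k a) = smul A k (der A a))
   \<and> (\<forall>a\<in>carrier A. \<forall>b\<in>carrier A.
        der A (mult A a b) =
          add A (add A (mult A (der A a) b) (mult A a (der A b)))
                (smul A lam (mult A (der A a) (der A b))))"

definition dhom :: "('k::comm_ring_1, 'a) kdalg \<Rightarrow> ('k, 'b) kdalg \<Rightarrow> ('a \<Rightarrow> 'b) \<Rightarrow> bool" where
  "dhom A R h \<longleftrightarrow>
     (\<forall>a\<in>carrier A. h a \<in> carrier R)
   \<and> (\<forall>a\<in>carrier A. \<forall>b\<in>carrier A. h (add A a b) = add R (h a) (h b))
   \<and> (\<forall>k. \<forall>a\<in>carrier A. h (smul A k a) = smul R k (h a))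
   \<and> (\<forall>a\<in>carrier A. \<forall>b\<in>carrier A. h (mult A a b) = mult R (h a) (h b))
   \<and> (\<forall>a\<in>carrier A. h (der A a) = der R (h a))"

text \<open>Free lambda-differential algebra on the set X (with structure map i),
  tested against all lambda-differential algebras whose elements live in type 'r.
  A free type variable 'r in a theorem is universally quantified.\<close>
definition free_lda :: "'r itself \<Rightarrow> 'k::comm_ring_1 \<Rightarrow> ('k, 'a) kdalg \<Rightarrow> 'x set \<Rightarrow> ('x \<Rightarrow> 'a) \<Rightarrow> bool" where
  "free_lda _ lam A X i \<longleftrightarrow>
     lambda_diff_alg lam A
   \<and> (\<forall>x\<in>X. i x \<in> carrier A)
   \<and> (\<forall>(R :: ('k, 'r) kdalg) f. lambda_diff_alg lam R \<and> (\<forall>x\<in>X. f x \<in> carrier R) \<longrightarrow>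
        (\<exists>h. dhom A R h \<and> (\<forall>x\<in>X. h (i x) = f x))
      \<and> (\<forall>h1 h2. dhom A R h1 \<and> dhom A R h2 \<and> (\<forall>x\<in>X. h1 (i x) = f x) \<and> (\<forall>x\<in>X. h2 (i x) = f x)
                 \<longrightarrow> (\<forall>a\<in>carrier A. h1 a = h2 a)))"

definition lincomb :: "('k, 'a) kdalg \<Rightarrow> ('i \<Rightarrow> 'a) \<Rightarrow> ('i \<times> 'k) list \<Rightarrow> 'a" where
  "lincomb A b ps = foldr (\<lambda>(i, k) acc. add A (smul A k (b i)) acc) ps (zero A)"

definition is_kbasis :: "('k::comm_ring_1, 'a) kdalg \<Rightarrow> 'i set \<Rightarrow> ('i \<Rightarrow> 'a) \<Rightarrow> bool" where
  "is_kbasis A I b \<longleftrightarrow>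
     (\<forall>i\<in>I. b i \<in> carrier A)
   \<and> (\<forall>a\<in>carrier A. \<exists>ps. set (map fst ps) \<subseteq> I \<and> a = lincomb A b ps)
   \<and> (\<forall>ps. distinct (map fst ps) \<and> set (map fst ps) \<subseteq> I \<and> lincomb A b ps = zero A
           \<longrightarrow> (\<forall>(i, k)\<in>set ps. k = 0))"

section \<open>The quotient K<X;D|T> = K<X;D> / Id(T)\<close>

definition cls :: "'x set \<Rightarrow> ('x, 'k::comm_ring_1) poly set \<Rightarrow> ('x, 'k) poly \<Rightarrow> ('x, 'k) poly set" where
  "cls X I p = {q \<in> KXD X. psub q p \<in> I}"

definition rep :: "'a set \<Rightarrow> 'a" where
  "rep C = (SOME p. p \<in> C)"

definition quot :: "'x set \<Rightarrow> ('x, 'k::comm_ring_1) poly set \<Rightarrow> ('k, ('x, 'k) poly set) kdalg" where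
  "quot X I =
     \<lparr> carrier = cls X I ` KXD X,
       add = (\<lambda>C1 C2. cls X I (padd (rep C1) (rep C2))),
       zero = cls X I pzero,
       mult = (\<lambda>C1 C2. cls X I (pmul (rep C1) (rep C2))),
       smul = (\<lambda>k C. cls X I (psmul k (rep C))),
       der = (\<lambda>C. cls X I (pD (rep C))) \<rparr>"

definition KXDT :: "'x set \<Rightarrow> 'k::comm_ring_1 \<Rightarrow> ('k, ('x, 'k) poly set) kdalg" where
  "KXDT X mu = quot X (IdT X (Tset X mu))"

end

theory Submission
  imports Defs
begin

text \<open>
  The element of T built from words x, y is (-mu) times the Leibniz defect
  D(xy) - D(x)y - xD(y) - lambda D(x)D(y); hence Id(T), the smallest operated ideal
  (closed under D and under multiplication by words on both sides) containing T,
  contains the Leibniz defect of every pair of polynomials.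

  The quotient of K<X;D> by an operated ideal containing all Leibniz defects
  is a lambda-differential algebra.  For a lambda-differential algebra R and f : X -> R,
  evaluating bracketed words in R gives a D-compatible algebra map K<X;D> -> R that
  kills Id(T) and therefore factors through the quotient; uniqueness holds because
  every class is built from the generators by sums, products and D.

  Phi(X) is the set of "good" words: words in which no two D-letters are
  adjacent, at any nesting depth.  Spanning: the relation
  D(x)D(y) = -mu D(x)y - mu xD(y) + mu D(xy)  (mod Id(T))
  lowers the number of D's, so by induction on it every polynomial is congruent to a
  combination of good words.  Independence: in the lambda-differential algebra of
  polynomials in the noncommuting variables x^(n) (x in X, n a natural number) with
  D = mu (shift - id), a good word w evaluates to a polynomial whose leading monomial
  (the one of maximal total shift) has coefficient mu^(number of D's in w) and
  determines w.  Since evaluation kills Id(T), no nontrivial combination of good words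
  lies in Id(T).
\<close>

section \<open>Convolution of functions on words\<close>

text \<open>Both K<X;D> and the model algebra used for linear independence are spaces of
  functions on words with the convolution (concatenation) product.\<close>

definition cmul :: "('a list \<Rightarrow> 'k::comm_semiring_1) \<Rightarrow> ('a list \<Rightarrow> 'k) \<Rightarrow> ('a list \<Rightarrow> 'k)" where
  "cmul p q = (\<lambda>w. \<Sum>i\<in>{0..length w}. p (take i w) * q (drop i w))"

definition cmono :: "'a list \<Rightarrow> 'a list \<Rightarrow> 'k::zero_neq_one" where
  "cmono u = (\<lambda>v. if v = u then 1 else 0)"

definition splits2 :: "'a list \<Rightarrow> ('a list \<times> 'a list) set" where
  "splits2 w = {(u,v). u @ v = w}"

definition splits3 :: "'a list \<Rightarrow> ('a list \<times> 'a list \<times> 'a list) set" where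
  "splits3 w = {(a,b,c). a @ b @ c = w}"

lemma splits2_finite[simp]: "finite (splits2 w)"
proof -
  have "splits2 w \<subseteq> (\<lambda>i. (take i w, drop i w)) ` {0..length w}"
  proof
    fix x assume "x \<in> splits2 w"
    then obtain u v where "x = (u, v)" "u @ v = w" by (auto simp: splits2_def)
    then show "x \<in> (\<lambda>i. (take i w, drop i w)) ` {0..length w}"
      by (intro image_eqI[of _ _ "length u"]) auto
  qed
  then show ?thesis by (rule finite_subset) simp
qed

lemma cmul_splits: "cmul p q w = (\<Sum>(u,v)\<in>splits2 w. p u * q v)"
  unfolding cmul_def splits2_def
  by (rule sum.reindex_bij_witness[of _ "\<lambda>(u,v). length u" "\<lambda>i. (take i w, drop i w)"]) auto

text \<open>Associativity: both sides are the sum over all splittings into three pieces.\<close>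

lemma cmul_assoc: "cmul (cmul p q) r = cmul p (cmul q r)"
proof
  fix w
  have "cmul (cmul p q) r w = (\<Sum>x\<in>splits2 w. (\<Sum>y\<in>splits2 (fst x). p (fst y) * q (snd y)) * r (snd x))"
    by (simp add: cmul_splits split_def)
  also have "\<dots> = (\<Sum>x\<in>splits2 w. \<Sum>y\<in>splits2 (fst x). p (fst y) * q (snd y) * r (snd x))"
    by (simp add: sum_distrib_right)
  also have "\<dots> = (\<Sum>(x,y)\<in>Sigma (splits2 w) (\<lambda>x. splits2 (fst x)). p (fst y) * q (snd y) * r (snd x))"
    by (rule sum.Sigma) auto
  also have "\<dots> = (\<Sum>(a,b,c)\<in>splits3 w. p a * q b * r c)"
    by (rule sum.reindex_bij_witness[of _ "\<lambda>(a,b,c). ((a@b,c),(a,b))" "\<lambda>((s,c),(a,b)). (a,b,c)"])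
      (auto simp: splits2_def splits3_def)
  finally have left: "cmul (cmul p q) r w = (\<Sum>(a,b,c)\<in>splits3 w. p a * q b * r c)" .
  have "cmul p (cmul q r) w = (\<Sum>x\<in>splits2 w. p (fst x) * (\<Sum>y\<in>splits2 (snd x). q (fst y) * r (snd y)))"
    by (simp add: cmul_splits split_def)
  also have "\<dots> = (\<Sum>x\<in>splits2 w. \<Sum>y\<in>splits2 (snd x). p (fst x) * q (fst y) * r (snd y))"
    by (simp add: sum_distrib_left mult.assoc)
  also have "\<dots> = (\<Sum>(x,y)\<in>Sigma (splits2 w) (\<lambda>x. splits2 (snd x)). p (fst x) * q (fst y) * r (snd y))"
    by (rule sum.Sigma) auto
  also have "\<dots> = (\<Sum>(a,b,c)\<in>splits3 w. p a * q b * r c)"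
    by (rule sum.reindex_bij_witness[of _ "\<lambda>(a,b,c). ((a,b@c),(b,c))" "\<lambda>((a,t),(b,c)). (a,b,c)"])
      (auto simp: splits2_def splits3_def)
  finally show "cmul (cmul p q) r w = cmul p (cmul q r) w" using left by simp
qed

lemma cmul_mono: "cmul (cmono u) (cmono v) = (cmono (u @ v) :: 'a list \<Rightarrow> 'k::comm_semiring_1)"
proof
  fix w
  have "cmul (cmono u) (cmono v) w = (\<Sum>x\<in>splits2 w. if x = (u,v) then (1::'k) else 0)"
    unfolding cmul_splits cmono_def by (rule sum.cong) (auto split: if_splits)
  also have "\<dots> = cmono (u@v) w"
    by (subst sum.delta) (simp, auto simp: splits2_def cmono_def)
  finally show "cmul (cmono u) (cmono v) w = (cmono (u @ v) w :: 'k)" .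
qed

lemma cmul_add_left: "cmul (\<lambda>w. p w + q w) r = (\<lambda>w. cmul p r w + cmul q r w)"
  by (simp add: cmul_def fun_eq_iff distrib_right sum.distrib)
lemma cmul_add_right: "cmul r (\<lambda>w. p w + q w) = (\<lambda>w. cmul r p w + cmul r q w)"
  by (simp add: cmul_def fun_eq_iff distrib_left sum.distrib)
lemma cmul_smul_left: "cmul (\<lambda>w. k * p w) r = (\<lambda>w. k * cmul p r w)"
  by (simp add: cmul_def fun_eq_iff sum_distrib_left mult.assoc)
lemma cmul_smul_right: "cmul r (\<lambda>w. k * p w) = (\<lambda>w. k * cmul r p w)"
  by (simp add: cmul_def fun_eq_iff sum_distrib_left mult.assoc mult.left_commute)
lemma cmul_zero_left[simp]: "cmul (\<lambda>w. 0) r = (\<lambda>w. 0)"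
  by (simp add: cmul_def fun_eq_iff)
lemma cmul_zero_right[simp]: "cmul r (\<lambda>w. 0) = (\<lambda>w. 0)"
  by (simp add: cmul_def fun_eq_iff)

lemma cmul_supp: "cmul p q w \<noteq> 0 \<Longrightarrow> \<exists>u v. w = u @ v \<and> p u \<noteq> 0 \<and> q v \<noteq> 0"
  unfolding cmul_def
  by (metis (no_types, lifting) append_take_drop_id mult_not_zero sum.neutral)

lemma cmul_finite:
  assumes "finite {w. p w \<noteq> 0}" "finite {w. q w \<noteq> 0}"
  shows "finite {w. cmul p q w \<noteq> 0}"
proof -
  have "{w. cmul p q w \<noteq> 0} \<subseteq> (\<lambda>(u,v). u @ v) ` ({w. p w \<noteq> 0} \<times> {w. q w \<noteq> 0})"
    by (auto dest!: cmul_supp)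
  then show ?thesis using assms finite_subset by blast
qed

section \<open>The free operated algebra K<X;D>\<close>

lemma pmul_eq: "pmul = cmul"
  by (simp add: pmul_def cmul_def fun_eq_iff)
lemma pmono_eq: "pmono = cmono"
  by (simp add: pmono_def cmono_def fun_eq_iff)

lemma pmul_mono[simp]: "pmul (pmono u) (pmono v) = pmono (u @ v)"
  by (simp add: pmul_eq pmono_eq cmul_mono)

lemma pmul_assoc: "pmul (pmul p q) r = pmul p (pmul q r)"
  by (simp add: pmul_eq cmul_assoc)

lemma pmul_padd_left: "pmul (padd p q) r = padd (pmul p r) (pmul q r)"
  by (simp add: pmul_eq padd_def cmul_add_left)
lemma pmul_padd_right: "pmul r (padd p q) = padd (pmul r p) (pmul r q)"
  by (simp add: pmul_eq padd_def cmul_add_right)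
lemma pmul_psmul_left: "pmul (psmul k p) r = psmul k (pmul p r)"
  by (simp add: pmul_eq psmul_def cmul_smul_left)
lemma pmul_psmul_right: "pmul r (psmul k p) = psmul k (pmul r p)"
  by (simp add: pmul_eq psmul_def cmul_smul_right)
lemma pmul_pzero_left[simp]: "pmul pzero r = pzero"
  by (simp add: pmul_eq pzero_def)
lemma pmul_pzero_right[simp]: "pmul r pzero = pzero"
  by (simp add: pmul_eq pzero_def)
lemma psub_as_padd: "psub p (q :: ('x,'k::comm_ring_1) poly) = padd p (psmul (-1) q)"
  by (simp add: psub_def padd_def psmul_def fun_eq_iff)
lemma pmul_psub_left: "pmul (psub p q) (r::('x,'k::comm_ring_1) poly) = psub (pmul p r) (pmul q r)"
  by (simp add: psub_as_padd pmul_padd_left pmul_psmul_left)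
lemma pmul_psub_right: "pmul (r::('x,'k::comm_ring_1) poly) (psub p q) = psub (pmul r p) (pmul r q)"
  by (simp add: psub_as_padd pmul_padd_right pmul_psmul_right)

lemma pD_padd: "pD (padd (p::('x,'k::comm_ring_1) poly) q) = padd (pD p) (pD q)"
  by (auto simp: pD_def padd_def fun_eq_iff split: option.splits)
lemma pD_psmul: "pD (psmul k (p::('x,'k::comm_ring_1) poly)) = psmul k (pD p)"
  by (auto simp: pD_def psmul_def fun_eq_iff split: option.splits)
lemma pD_psub: "pD (psub p q) = psub (pD p) (pD (q::('x,'k::comm_ring_1) poly))"
  by (auto simp: pD_def psub_def fun_eq_iff split: option.splits)
lemma pD_pzero[simp]: "pD pzero = (pzero::('x,'k::comm_ring_1) poly)"
  by (auto simp: pD_def pzero_def fun_eq_iff split: option.splits)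
lemma unD_Some: "unD w = Some u \<longleftrightarrow> w = [LD u]"
  by (cases w rule: unD.cases) auto
lemma pD_pmono[simp]: "pD (pmono u) = (pmono [LD u] :: ('x,'k::comm_ring_1) poly)"
  by (auto simp: pD_def pmono_def fun_eq_iff unD_Some split: option.splits)

lemma psub_self: "psub p p = (pzero :: ('x,'k::comm_ring_1) poly)"
  by (simp add: psub_def pzero_def fun_eq_iff)
lemma padd_comm: "padd p q = padd q (p::('x,'k::comm_ring_1) poly)"
  by (simp add: padd_def fun_eq_iff add.commute)
lemma psmul_padd: "psmul k (padd p q) = padd (psmul k p) (psmul k (q::('x,'k::comm_ring_1) poly))"
  by (simp add: padd_def psmul_def fun_eq_iff algebra_simps)

lemma padd_pzero[simp]: "padd pzero p = (p::('x,'k::comm_ring_1) poly)" "padd p pzero = (p::('x,'k::comm_ring_1) poly)"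
  by (simp_all add: padd_def pzero_def)
lemma psmul_pzero[simp]: "psmul k pzero = (pzero :: ('x,'k::comm_ring_1) poly)"
  by (simp add: psmul_def pzero_def)
lemma psmul_one[simp]: "psmul 1 p = (p :: ('x,'k::comm_ring_1) poly)"
  by (simp add: psmul_def)
lemma psmul_zero[simp]: "psmul 0 p = (pzero :: ('x,'k::comm_ring_1) poly)"
  by (simp add: psmul_def pzero_def)

lemma frakS_append: "u \<in> frakS X \<Longrightarrow> v \<in> frakS X \<Longrightarrow> u @ v \<in> frakS X"
  by (simp add: frakS_def)
lemma frakS_LD: "[LD u] \<in> frakS X \<longleftrightarrow> u \<in> frakS X"
  by (simp add: frakS_def)
lemma frakS_single: "[a] \<in> frakS X \<longleftrightarrow> wfl X a"
  by (simp add: frakS_def)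

lemma frakS_induct[consumes 1, case_names gen bracket cons]:
  assumes w: "w \<in> frakS X"
    and gen: "\<And>x. x \<in> X \<Longrightarrow> P [Lx x]"
    and bracket: "\<And>u. u \<in> frakS X \<Longrightarrow> P u \<Longrightarrow> P [LD u]"
    and cons: "\<And>a v. [a] \<in> frakS X \<Longrightarrow> v \<in> frakS X \<Longrightarrow> P [a] \<Longrightarrow> P v \<Longrightarrow> P (a # v)"
  shows "P w"
proof -
  have words: "P v" if "v \<in> frakS X" "\<forall>a\<in>set v. P [a]" for v
    using that
  proof (induction v)
    case (Cons a v)
    then show ?case by (cases "v = []") (auto intro: cons simp: frakS_def)
  qed (simp add: frakS_def)
  have "wfl X a \<Longrightarrow> P [a]" for a
  proof (induction a)
    case (Lx x) then show ?case by (simp add: gen)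
  next
    case (LD u)
    then have "u \<in> frakS X" by (simp add: frakS_def)
    moreover have "P u" using LD calculation by (intro words) (auto simp: list_all_iff)
    ultimately show ?case by (rule bracket)
  qed
  then show ?thesis using w by (intro words) (auto simp: frakS_def list_all_iff)
qed

lemma KXD_iff: "p \<in> KXD X \<longleftrightarrow> finite {w. p w \<noteq> 0} \<and> (\<forall>w. p w \<noteq> 0 \<longrightarrow> w \<in> frakS X)"
  by (simp add: KXD_def)

lemma KXD_pzero[simp]: "(pzero::('x,'k::comm_ring_1) poly) \<in> KXD X"
  by (simp add: KXD_def pzero_def)
lemma KXD_padd: "(p::('x,'k::comm_ring_1) poly) \<in> KXD X \<Longrightarrow> q \<in> KXD X \<Longrightarrow> padd p q \<in> KXD X"
proof -
  assume a: "p \<in> KXD X" "q \<in> KXD X"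
  have "{w. p w + q w \<noteq> 0} \<subseteq> {w. p w \<noteq> 0} \<union> {w. q w \<noteq> 0}" by auto
  moreover have "\<forall>w. p w + q w \<noteq> 0 \<longrightarrow> w \<in> frakS X"
    using a by (metis KXD_iff add.right_neutral)
  ultimately show ?thesis using a unfolding KXD_iff padd_def by (auto elim: finite_subset)
qed
lemma KXD_psmul: "(p::('x,'k::comm_ring_1) poly) \<in> KXD X \<Longrightarrow> psmul k p \<in> KXD X"
proof -
  assume a: "p \<in> KXD X"
  have "{w. k * p w \<noteq> 0} \<subseteq> {w. p w \<noteq> 0}" by auto
  moreover have "\<forall>w. k * p w \<noteq> 0 \<longrightarrow> w \<in> frakS X"
    using a by (metis KXD_iff mult_zero_right)
  ultimately show ?thesis using a unfolding KXD_iff psmul_def by (auto elim: finite_subset)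
qed
lemma KXD_psub: "p \<in> KXD X \<Longrightarrow> q \<in> KXD X \<Longrightarrow> psub p (q::('x,'k::comm_ring_1) poly) \<in> KXD X"
  by (simp add: psub_as_padd KXD_padd KXD_psmul)
lemma KXD_pmono: "w \<in> frakS X \<Longrightarrow> (pmono w :: ('x,'k::comm_ring_1) poly) \<in> KXD X"
  unfolding KXD_def pmono_def by auto
lemma KXD_pmul: "(p::('x,'k::comm_ring_1) poly) \<in> KXD X \<Longrightarrow> q \<in> KXD X \<Longrightarrow> pmul p q \<in> KXD X"
  unfolding KXD_iff pmul_eq
  by (auto intro: cmul_finite dest!: cmul_supp simp: frakS_append)
lemma KXD_pD: "(p::('x,'k::comm_ring_1) poly) \<in> KXD X \<Longrightarrow> pD p \<in> KXD X"
proof -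
  assume p: "p \<in> KXD X"
  have "{w. pD p w \<noteq> 0} \<subseteq> (\<lambda>u. [LD u]) ` {w. p w \<noteq> 0}"
    by (auto simp: pD_def unD_Some split: option.splits)
  moreover have "\<forall>w. pD p w \<noteq> 0 \<longrightarrow> w \<in> frakS X"
    using p by (auto simp: pD_def KXD_iff unD_Some frakS_LD split: option.splits)
  ultimately show ?thesis using p unfolding KXD_iff by (auto elim: finite_subset)
qed

lemmas KXD_closed = KXD_padd KXD_psmul KXD_psub KXD_pmono KXD_pmul KXD_pD KXD_pzero

lemma poly_induct_support:
  assumes "finite S"
    and "P (pzero :: ('x,'k::comm_ring_1) poly)"
    and step: "\<And>k w q. w \<in> frakS X \<Longrightarrow> q \<in> KXD X \<Longrightarrow> P q \<Longrightarrow> P (padd (psmul k (pmono w)) q)"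
  shows "\<forall>p. p \<in> KXD X \<and> {w. p w \<noteq> (0::'k)} \<subseteq> S \<longrightarrow> P p"
  using assms(1)
proof (induction S rule: finite_induct)
  case empty
  then show ?case using assms(2) by (auto simp: pzero_def fun_eq_iff)
next
  case (insert a S)
  show ?case
  proof (intro allI impI)
    fix p :: "('x,'k) poly"
    assume h: "p \<in> KXD X \<and> {w. p w \<noteq> 0} \<subseteq> insert a S"
    define p' where "p' = p(a := 0)"
    have p'K: "p' \<in> KXD X" using h by (auto simp: p'_def KXD_iff elim: finite_subset[rotated])
    have "{w. p' w \<noteq> 0} \<subseteq> S" using h by (auto simp: p'_def)
    then have Pp': "P p'" using insert.IH p'K by blast
    show "P p"
    proof (cases "p a = 0")
      case True
      then have "p = p'" by (auto simp: p'_def)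
      then show ?thesis using Pp' by simp
    next
      case False
      then have "a \<in> frakS X" using h by (auto simp: KXD_iff)
      moreover have "p = padd (psmul (p a) (pmono a)) p'"
        by (auto simp: p'_def padd_def psmul_def pmono_def fun_eq_iff)
      ultimately show ?thesis using step[OF _ p'K Pp'] by metis
    qed
  qed
qed

lemma poly_induct[consumes 1, case_names zero step]:
  assumes "p \<in> KXD X"
    and "P pzero"
    and "\<And>k w q. w \<in> frakS X \<Longrightarrow> q \<in> KXD X \<Longrightarrow> P q \<Longrightarrow> P (padd (psmul k (pmono w)) q)"
  shows "P (p :: ('x,'k::comm_ring_1) poly)"
  using poly_induct_support[of "{w. p w \<noteq> 0}" P X, OF _ assms(2,3)] assms(1)
  by (auto simp: KXD_iff)

lemma kspan_add: "p \<in> kspan S \<Longrightarrow> q \<in> kspan S \<Longrightarrow> padd p q \<in> kspan S"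
proof (induction p rule: kspan.induct)
  case kspan_zero
  then show ?case by simp
next
  case (kspan_step p r k)
  have "padd (padd (psmul k p) r) q = padd (psmul k p) (padd r q)"
    by (simp add: padd_def fun_eq_iff add.assoc)
  then show ?case using kspan_step by (auto intro: kspan.kspan_step)
qed

lemma kspan_smul: "p \<in> kspan S \<Longrightarrow> psmul c p \<in> kspan S"
proof (induction p rule: kspan.induct)
  case kspan_zero
  then show ?case by (simp add: kspan.kspan_zero)
next
  case (kspan_step p r k)
  have "psmul c (padd (psmul k p) r) = padd (psmul (c*k) p) (psmul c r)"
    by (simp add: padd_def psmul_def fun_eq_iff algebra_simps)
  then show ?case using kspan_step by (auto intro: kspan.kspan_step)
qed

lemma kspan_base: "p \<in> S \<Longrightarrow> p \<in> kspan S"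
proof -
  assume "p \<in> S"
  then have "padd (psmul 1 p) pzero \<in> kspan S" by (rule kspan.kspan_step) (rule kspan.kspan_zero)
  then show ?thesis by simp
qed

lemma kspan_subset: "p \<in> kspan S \<Longrightarrow> S \<subseteq> KXD X \<Longrightarrow> p \<in> KXD X"
  by (induction p rule: kspan.induct) (auto intro: KXD_closed)

lemma prodl_Cons: "xs \<noteq> [] \<Longrightarrow> prodl (a # xs) = pmul a (prodl xs)"
  by (cases xs) auto

lemma prodl_append: "xs \<noteq> [] \<Longrightarrow> ys \<noteq> [] \<Longrightarrow> prodl (xs @ ys) = pmul (prodl xs) (prodl ys)"
proof (induction xs rule: prodl.induct)
  case 1 then show ?case by simp
next
  case (2 p) then show ?case by (simp add: prodl_Cons)
next
  case (3 p q ps) then show ?case by (simp add: pmul_assoc)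
qed

lemma prodl_KXD: "xs \<noteq> [] \<Longrightarrow> set xs \<subseteq> KXD X \<Longrightarrow> prodl (xs :: ('x,'k::comm_ring_1) poly list) \<in> KXD X"
  by (induction xs rule: prodl.induct) (auto intro: KXD_pmul)

lemma prodl_mono: "w \<noteq> [] \<Longrightarrow> prodl (map (\<lambda>a. pmono [a]) w) = pmono w"
proof (induction w)
  case Nil then show ?case by simp
next
  case (Cons a w)
  then show ?case by (cases w) (auto simp: prodl_Cons)
qed

section \<open>The operated ideal Id(T)\<close>

text \<open>The alphabet X extended by the star, represented by None.\<close>

definition starX :: "'x set \<Rightarrow> 'x option set" where
  "starX X = insert None (Some ` X)"

lemma subst_letter_KXD:
  assumes t: "t \<in> KXD X"
  shows "wfl (starX X) a \<Longrightarrow> subst_letter t a \<in> KXD X"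
proof (induction a)
  case (Lx x)
  then show ?case using t by (cases x) (auto simp: starX_def intro!: KXD_pmono simp: frakS_single)
next
  case (LD w)
  then have "prodl (map (subst_letter t) w) \<in> KXD X"
    by (intro prodl_KXD) (auto simp: list_all_iff)
  then show ?case by (simp add: KXD_pD)
qed

lemma subst_word_KXD: "t \<in> KXD X \<Longrightarrow> u \<in> frakS (starX X) \<Longrightarrow> subst_word t u \<in> KXD X"
  unfolding subst_word_def frakS_def
  by (intro prodl_KXD) (auto simp: list_all_iff intro: subst_letter_KXD)

lemma subst_word_append: "u \<noteq> [] \<Longrightarrow> v \<noteq> [] \<Longrightarrow> subst_word t (u @ v) = pmul (subst_word t u) (subst_word t v)"
  unfolding subst_word_def by (simp add: prodl_append)

lemma nstar_word_append: "nstar_word (u @ v) = nstar_word u + nstar_word v"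
  by (simp add: nstar_word_def)

lemma emb_letter:
  shows "wfl X a \<Longrightarrow> wfl (starX X) (map_letter Some a) \<and> nstar (map_letter Some a) = 0
     \<and> subst_letter t (map_letter Some a) = pmono [a]"
proof (induction a)
  case (Lx x)
  then show ?case by (simp add: starX_def)
next
  case (LD w)
  then have w: "w \<noteq> []" "\<forall>a\<in>set w. wfl X a" by (auto simp: list_all_iff)
  then have IH: "\<forall>a\<in>set w. wfl (starX X) (map_letter Some a) \<and> nstar (map_letter Some a) = 0
     \<and> subst_letter t (map_letter Some a) = pmono [a]" using LD.IH by blast
  have e: "map (subst_letter t \<circ> map_letter Some) w = map (\<lambda>a. pmono [a]) w"
    using IH by (auto intro: map_cong)
  have "subst_letter t (map_letter Some (LD w)) = pD (prodl (map (subst_letter t \<circ> map_letter Some) w))"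
    by simp
  also have "\<dots> = pmono [LD w]" unfolding e prodl_mono[OF w(1)] by simp
  finally have "subst_letter t (map_letter Some (LD w)) = pmono [LD w]" .
  moreover have "sum_list (map (nstar \<circ> map_letter Some) w) = 0"
  proof -
    have "\<forall>a\<in>set w. nstar (map_letter Some a) = 0" using IH by blast
    then show ?thesis by (simp add: sum_list_eq_0_iff)
  qed
  ultimately show ?case using w IH by (simp add: list_all_iff)
qed

definition emb :: "'x letter list \<Rightarrow> 'x option letter list" where
  "emb w = map (map_letter Some) w"

lemma emb_word:
  assumes "w \<in> frakS X"
  shows "emb w \<in> frakS (starX X)" "nstar_word (emb w) = 0" "subst_word t (emb w) = pmono w"
proof -
  have w: "w \<noteq> []" "\<forall>a\<in>set w. wfl X a" using assms by (auto simp: frakS_def list_all_iff)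
  then show "emb w \<in> frakS (starX X)" using emb_letter by (auto simp: emb_def frakS_def list_all_iff)
  have "\<forall>a\<in>set w. nstar (map_letter Some a) = 0"
    using w emb_letter[where t = "pzero::('x, int) poly"] by blast
  then show "nstar_word (emb w) = 0" by (simp add: emb_def nstar_word_def sum_list_eq_0_iff)
  have "map (subst_letter t) (emb w) = map (\<lambda>a. pmono [a]) w"
    using w emb_letter by (auto simp: emb_def)
  then show "subst_word t (emb w) = pmono w" using w by (simp add: subst_word_def prodl_mono)
qed

definition IdT_gen :: "'x set \<Rightarrow> ('x, 'k::comm_ring_1) poly set \<Rightarrow> ('x, 'k) poly set" where
  "IdT_gen X T = {subst_word t u | u t. u \<in> frakS (starX X) \<and> nstar_word u = 1 \<and> t \<in> T}"

lemma IdT_eq_span: "IdT X T = kspan (IdT_gen X T)"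
  by (simp add: IdT_def IdT_gen_def starX_def)

lemma IdT_gen_T: "t \<in> T \<Longrightarrow> t \<in> IdT_gen X T"
  unfolding IdT_gen_def
  by (rule CollectI, rule exI[of _ "[Lx None]"], rule exI[of _ t])
    (simp add: subst_word_def nstar_word_def frakS_def starX_def)

lemma IdT_gen_KXD: "T \<subseteq> KXD X \<Longrightarrow> g \<in> IdT_gen X T \<Longrightarrow> g \<in> KXD X"
  unfolding IdT_gen_def by (auto intro: subst_word_KXD)

text \<open>The generators are closed under D (bracket the star word) and under multiplication by words on either side (concatenate star words).\<close>

lemma IdT_gen_D: "g \<in> IdT_gen X T \<Longrightarrow> pD g \<in> IdT_gen X T"
proof -
  assume "g \<in> IdT_gen X T"
  then obtain u t where g: "g = subst_word t u" "u \<in> frakS (starX X)" "nstar_word u = 1" "t \<in> T"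
    by (auto simp: IdT_gen_def)
  have "pD g = subst_word t [LD u]" using g by (simp add: subst_word_def)
  moreover have "[LD u] \<in> frakS (starX X)" using g by (simp add: frakS_def)
  moreover have "nstar_word [LD u] = 1" using g by (simp add: nstar_word_def)
  ultimately show ?thesis using g unfolding IdT_gen_def by blast
qed

lemma IdT_gen_lmul: "w \<in> frakS X \<Longrightarrow> g \<in> IdT_gen X T \<Longrightarrow> pmul (pmono w) g \<in> IdT_gen X T"
proof -
  assume w: "w \<in> frakS X" and "g \<in> IdT_gen X T"
  then obtain u t where g: "g = subst_word t u" "u \<in> frakS (starX X)" "nstar_word u = 1" "t \<in> T"
    by (auto simp: IdT_gen_def)
  have ne: "emb w \<noteq> []" "u \<noteq> []" using w g by (auto simp: emb_def frakS_def)
  have e: "subst_word t (emb w) = pmono w" by (rule emb_word(3)[OF w])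
  have "pmul (pmono w) g = subst_word t (emb w @ u)"
    using g ne by (simp add: subst_word_append e)
  moreover have "emb w @ u \<in> frakS (starX X)" using g emb_word[OF w] by (simp add: frakS_append)
  moreover have "nstar_word (emb w @ u) = 1" using g emb_word[OF w] by (simp add: nstar_word_append)
  ultimately show ?thesis using g unfolding IdT_gen_def by blast
qed

lemma IdT_gen_rmul: "w \<in> frakS X \<Longrightarrow> g \<in> IdT_gen X T \<Longrightarrow> pmul g (pmono w) \<in> IdT_gen X T"
proof -
  assume w: "w \<in> frakS X" and "g \<in> IdT_gen X T"
  then obtain u t where g: "g = subst_word t u" "u \<in> frakS (starX X)" "nstar_word u = 1" "t \<in> T"
    by (auto simp: IdT_gen_def)
  have ne: "emb w \<noteq> []" "u \<noteq> []" using w g by (auto simp: emb_def frakS_def)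
  have e: "subst_word t (emb w) = pmono w" by (rule emb_word(3)[OF w])
  have "pmul g (pmono w) = subst_word t (u @ emb w)"
    using g ne by (simp add: subst_word_append e)
  moreover have "u @ emb w \<in> frakS (starX X)" using g emb_word[OF w] by (simp add: frakS_append)
  moreover have "nstar_word (u @ emb w) = 1" using g emb_word[OF w] by (simp add: nstar_word_append)
  ultimately show ?thesis using g unfolding IdT_gen_def by blast
qed

lemma IdT_KXD: "T \<subseteq> KXD X \<Longrightarrow> p \<in> IdT X T \<Longrightarrow> p \<in> KXD X"
  unfolding IdT_eq_span using kspan_subset IdT_gen_KXD by blast

lemma IdT_zero: "pzero \<in> IdT X T"
  by (simp add: IdT_eq_span kspan.kspan_zero)
lemma IdT_add: "p \<in> IdT X T \<Longrightarrow> q \<in> IdT X T \<Longrightarrow> padd p q \<in> IdT X T"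
  by (simp add: IdT_eq_span kspan_add)
lemma IdT_smul: "p \<in> IdT X T \<Longrightarrow> psmul c p \<in> IdT X T"
  by (simp add: IdT_eq_span kspan_smul)
lemma IdT_T: "t \<in> T \<Longrightarrow> t \<in> IdT X T"
  by (simp add: IdT_eq_span kspan_base IdT_gen_T)

lemma IdT_D: "p \<in> IdT X T \<Longrightarrow> pD p \<in> IdT X T"
  unfolding IdT_eq_span
proof (induction p rule: kspan.induct)
  case kspan_zero then show ?case by (simp add: kspan.kspan_zero)
next
  case (kspan_step p q k)
  then show ?case by (auto simp: pD_padd pD_psmul intro!: kspan.kspan_step IdT_gen_D)
qed

lemma IdT_gen_lmul_gen: "q \<in> KXD X \<Longrightarrow> g \<in> IdT_gen X T \<Longrightarrow> pmul q g \<in> kspan (IdT_gen X T)"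
proof (induction q rule: poly_induct)
  case zero then show ?case by (simp add: kspan.kspan_zero)
next
  case (step k w q)
  then show ?case
    by (auto simp: pmul_padd_left pmul_psmul_left intro!: kspan.kspan_step IdT_gen_lmul)
qed

lemma IdT_gen_rmul_gen: "q \<in> KXD X \<Longrightarrow> g \<in> IdT_gen X T \<Longrightarrow> pmul g q \<in> kspan (IdT_gen X T)"
proof (induction q rule: poly_induct)
  case zero then show ?case by (simp add: kspan.kspan_zero)
next
  case (step k w q)
  then show ?case
    by (auto simp: pmul_padd_right pmul_psmul_right intro!: kspan.kspan_step IdT_gen_rmul)
qed

lemma IdT_lmul: "p \<in> IdT X T \<Longrightarrow> q \<in> KXD X \<Longrightarrow> pmul q p \<in> IdT X T"
  unfolding IdT_eq_span
proof (induction p rule: kspan.induct)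
  case kspan_zero then show ?case by (simp add: kspan.kspan_zero)
next
  case (kspan_step p r k)
  then show ?case
    by (auto simp: pmul_padd_right pmul_psmul_right intro!: kspan_add kspan_smul IdT_gen_lmul_gen)
qed

lemma IdT_rmul: "p \<in> IdT X T \<Longrightarrow> q \<in> KXD X \<Longrightarrow> pmul p q \<in> IdT X T"
  unfolding IdT_eq_span
proof (induction p rule: kspan.induct)
  case kspan_zero then show ?case by (simp add: kspan.kspan_zero)
next
  case (kspan_step p r k)
  then show ?case
    by (auto simp: pmul_padd_left pmul_psmul_left intro!: kspan_add kspan_smul IdT_gen_rmul_gen)
qed

locale star_kill =
  fixes F :: "('x,'k::comm_ring_1) poly \<Rightarrow> 'b" and m :: "'b \<Rightarrow> 'b \<Rightarrow> 'b" and d :: "'b \<Rightarrow> 'b"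
    and z :: 'b and X :: "'x set" and t :: "('x,'k) poly"
  assumes mulF: "\<And>a b. a \<in> KXD X \<Longrightarrow> b \<in> KXD X \<Longrightarrow> F (pmul a b) = m (F a) (F b)"
    and DF: "\<And>a. a \<in> KXD X \<Longrightarrow> F (pD a) = d (F a)"
    and mz1: "\<And>a. a \<in> KXD X \<Longrightarrow> m z (F a) = z"
    and mz2: "\<And>a. a \<in> KXD X \<Longrightarrow> m (F a) z = z"
    and dz: "d z = z"
    and tK: "t \<in> KXD X" and tz: "F t = z"
begin

lemma list_kill:
  assumes "\<forall>a\<in>set w. wfl (starX X) a \<and> nstar a \<noteq> 0 \<longrightarrow> F (subst_letter t a) = z"
    and "w \<noteq> []" "list_all (wfl (starX X)) w" "sum_list (map nstar w) \<noteq> 0"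
  shows "F (prodl (map (subst_letter t) w)) = z"
  using assms
proof (induction w)
  case Nil then show ?case by simp
next
  case (Cons a w)
  show ?case
  proof (cases "w = []")
    case True
    then show ?thesis using Cons.prems by simp
  next
    case False
    have aK: "subst_letter t a \<in> KXD X" using Cons.prems by (simp add: subst_letter_KXD[OF tK])
    have wK: "prodl (map (subst_letter t) w) \<in> KXD X"
      using Cons.prems False by (intro prodl_KXD) (auto simp: list_all_iff subst_letter_KXD[OF tK])
    have eq: "F (prodl (map (subst_letter t) (a # w))) = m (F (subst_letter t a)) (F (prodl (map (subst_letter t) w)))"
      using False aK wK by (simp add: prodl_Cons mulF)
    show ?thesis
    proof (cases "nstar a = 0")
      case True
      then have "F (prodl (map (subst_letter t) w)) = z"
        using Cons False by auto
      then show ?thesis using eq mz2[OF aK] by simp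
    next
      case False
      then have "F (subst_letter t a) = z" using Cons.prems by auto
      then show ?thesis using eq mz1[OF wK] by simp
    qed
  qed
qed

lemma letter_kill: "wfl (starX X) a \<Longrightarrow> nstar a \<noteq> 0 \<Longrightarrow> F (subst_letter t a) = z"
proof (induction a)
  case (Lx x)
  then show ?case using tz by (cases x) auto
next
  case (LD w)
  have "F (prodl (map (subst_letter t) w)) = z"
    using LD by (intro list_kill) auto
  moreover have "prodl (map (subst_letter t) w) \<in> KXD X"
    using LD.prems by (intro prodl_KXD) (auto simp: list_all_iff subst_letter_KXD[OF tK])
  ultimately show ?case by (simp add: DF dz)
qed

lemma word_kill: "u \<in> frakS (starX X) \<Longrightarrow> nstar_word u \<noteq> 0 \<Longrightarrow> F (subst_word t u) = z"
  unfolding subst_word_def nstar_word_def frakS_def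
  by (rule list_kill) (auto intro: letter_kill)

end

section \<open>Leibniz defects and the set T\<close>

definition Leib :: "'k::comm_ring_1 \<Rightarrow> ('x,'k) poly \<Rightarrow> ('x,'k) poly \<Rightarrow> ('x,'k) poly" where
  "Leib lam x y = psub (pD (pmul x y))
      (padd (padd (pmul (pD x) y) (pmul x (pD y))) (psmul lam (pmul (pD x) (pD y))))"

lemma Leib_add_left: "Leib lam (padd a b) c = padd (Leib lam a c) (Leib lam b c)"
  unfolding Leib_def
  by (simp add: pD_padd pmul_padd_left pmul_padd_right)
     (simp add: fun_eq_iff padd_def psub_def psmul_def algebra_simps)
lemma Leib_add_right: "Leib lam c (padd a b) = padd (Leib lam c a) (Leib lam c b)"
  unfolding Leib_def
  by (simp add: pD_padd pmul_padd_left pmul_padd_right)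
     (simp add: fun_eq_iff padd_def psub_def psmul_def algebra_simps)
lemma Leib_smul_left: "Leib lam (psmul k a) c = psmul k (Leib lam a c)"
  unfolding Leib_def
  by (simp add: pD_psmul pmul_psmul_left pmul_psmul_right)
     (simp add: fun_eq_iff padd_def psub_def psmul_def algebra_simps)
lemma Leib_smul_right: "Leib lam c (psmul k a) = psmul k (Leib lam c a)"
  unfolding Leib_def
  by (simp add: pD_psmul pmul_psmul_left pmul_psmul_right)
     (simp add: fun_eq_iff padd_def psub_def psmul_def algebra_simps)
lemma Leib_zero_left[simp]: "Leib lam pzero c = pzero"
  unfolding Leib_def by simp (simp add: fun_eq_iff padd_def psub_def psmul_def pzero_def)
lemma Leib_zero_right[simp]: "Leib lam c pzero = pzero"
  unfolding Leib_def by simp (simp add: fun_eq_iff padd_def psub_def psmul_def pzero_def)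

lemma KXD_Leib: "p \<in> KXD X \<Longrightarrow> q \<in> KXD X \<Longrightarrow> Leib lam p q \<in> KXD X"
  unfolding Leib_def by (intro KXD_closed)

definition tT :: "'k::comm_ring_1 \<Rightarrow> 'x letter list \<Rightarrow> 'x letter list \<Rightarrow> ('x,'k) poly" where
  "tT mu x y = psub (padd (padd (pmul (pD (pmono x)) (pD (pmono y)))
                                  (psmul mu (pmul (pD (pmono x)) (pmono y))))
                            (psmul mu (pmul (pmono x) (pD (pmono y)))))
                      (psmul mu (pD (pmul (pmono x) (pmono y))))"

text \<open>Since lam mu = 1, the element of T is (-mu) times the Leibniz defect of the two monomials.\<close>

lemma tT_coeff_identity: "lam * mu = (1::'k::comm_ring_1) \<Longrightarrow>
   A + mu * B + mu * C - mu * E = (- mu) * (E - (B + C + lam * A))"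
proof -
  assume h: "lam * mu = 1"
  have "(- mu) * (E - (B + C + lam * A)) = mu * B + mu * C - mu * E + (lam * mu) * A"
    by (simp add: algebra_simps)
  then show ?thesis using h by simp
qed

lemma tT_Leib: "lam * mu = 1 \<Longrightarrow> tT mu x y = psmul (- mu) (Leib lam (pmono x) (pmono y))"
  unfolding tT_def Leib_def
  by (simp add: fun_eq_iff padd_def psub_def psmul_def tT_coeff_identity del: pD_pmono pmul_mono)

lemma Leib_tT: "lam * mu = 1 \<Longrightarrow> Leib lam (pmono x) (pmono y) = psmul (- lam) (tT mu x y)"
proof -
  assume h: "lam * mu = 1"
  have "psmul (- lam) (tT mu x y) = psmul (- lam) (psmul (- mu) (Leib lam (pmono x) (pmono y)))"
    by (simp add: tT_Leib[OF h])
  also have "\<dots> = psmul (lam * mu) (Leib lam (pmono x) (pmono y))"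
    by (simp add: psmul_def fun_eq_iff mult.assoc)
  finally show ?thesis using h by simp
qed

lemma tT_Tset: "x \<in> frakS X \<Longrightarrow> y \<in> frakS X \<Longrightarrow> tT mu x y \<in> Tset X mu"
  unfolding Tset_def tT_def by blast

lemma Tset_KXD: "Tset X mu \<subseteq> KXD X"
  unfolding Tset_def by (auto intro!: KXD_closed) (auto simp: frakS_def)

lemma Leib_IdT:
  assumes h: "lam * mu = 1" and p: "p \<in> KXD X" and q: "q \<in> KXD X"
  shows "Leib lam p q \<in> IdT X (Tset X mu)"
  using p
proof (induction p rule: poly_induct)
  case zero then show ?case by (simp add: IdT_zero)
next
  case (step k w p)
  have "Leib lam (pmono w) q \<in> IdT X (Tset X mu)"
    using q
  proof (induction q rule: poly_induct)
    case zero then show ?case by (simp add: IdT_zero)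
  next
    case (step k' w' q)
    have "Leib lam (pmono w) (pmono w') \<in> IdT X (Tset X mu)"
      using step(1) \<open>w \<in> frakS X\<close> by (simp add: Leib_tT[OF h] IdT_smul IdT_T tT_Tset)
    then show ?case using step by (simp add: Leib_add_right Leib_smul_right IdT_add IdT_smul)
  qed
  then show ?case using step by (simp add: Leib_add_left Leib_smul_left IdT_add IdT_smul)
qed

section \<open>Quotients by operated ideals containing all Leibniz defects\<close>

locale diff_quotient =
  fixes X :: "'x set" and I :: "('x,'k::comm_ring_1) poly set" and lam :: 'k
  assumes I_sub: "\<And>p. p \<in> I \<Longrightarrow> p \<in> KXD X"
    and I_zero: "pzero \<in> I"
    and I_add: "\<And>p q. p \<in> I \<Longrightarrow> q \<in> I \<Longrightarrow> padd p q \<in> I"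
    and I_smul: "\<And>p c. p \<in> I \<Longrightarrow> psmul c p \<in> I"
    and I_lmul: "\<And>p q. p \<in> I \<Longrightarrow> q \<in> KXD X \<Longrightarrow> pmul q p \<in> I"
    and I_rmul: "\<And>p q. p \<in> I \<Longrightarrow> q \<in> KXD X \<Longrightarrow> pmul p q \<in> I"
    and I_D: "\<And>p. p \<in> I \<Longrightarrow> pD p \<in> I"
    and I_Leib: "\<And>p q. p \<in> KXD X \<Longrightarrow> q \<in> KXD X \<Longrightarrow> Leib lam p q \<in> I"
begin

abbreviation "V \<equiv> KXD X"
abbreviation "C \<equiv> cls X I"
abbreviation "Q \<equiv> quot X I"

lemma I_diff: "p \<in> I \<Longrightarrow> q \<in> I \<Longrightarrow> psub p q \<in> I"
  by (simp add: psub_as_padd I_add I_smul)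

lemma cls_mem: "p \<in> V \<Longrightarrow> p \<in> C p"
  by (simp add: cls_def psub_self I_zero)

lemma cls_eq: "p \<in> V \<Longrightarrow> q \<in> V \<Longrightarrow> C p = C q \<longleftrightarrow> psub p q \<in> I"
proof
  assume p: "p \<in> V" and q: "q \<in> V" and e: "C p = C q"
  then have "p \<in> C q" using cls_mem by blast
  then show "psub p q \<in> I" by (simp add: cls_def)
next
  assume p: "p \<in> V" and q: "q \<in> V" and d: "psub p q \<in> I"
  have a: "psub r q = padd (psub r p) (psub p q)" for r
    by (simp add: psub_def padd_def fun_eq_iff)
  have b: "psub r p = psub (psub r q) (psub p q)" for r
    by (simp add: psub_def fun_eq_iff)
  show "C p = C q"
  proof (rule set_eqI)
    fix r
    show "r \<in> C p \<longleftrightarrow> r \<in> C q"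
    proof
      assume "r \<in> C p"
      then have "r \<in> V" "psub r p \<in> I" by (auto simp: cls_def)
      then show "r \<in> C q" using a[of r] d I_add by (simp add: cls_def)
    next
      assume "r \<in> C q"
      then have "r \<in> V" "psub r q \<in> I" by (auto simp: cls_def)
      then show "r \<in> C p" using b[of r] d I_diff by (simp add: cls_def)
    qed
  qed
qed

lemma rep_cls: "p \<in> V \<Longrightarrow> rep (C p) \<in> V \<and> psub (rep (C p)) p \<in> I"
proof -
  assume p: "p \<in> V"
  then have "rep (C p) \<in> C p" unfolding rep_def using cls_mem by (metis someI_ex)
  then show ?thesis by (simp add: cls_def)
qed

lemma Q_carrier: "carrier Q = C ` V"
  by (simp add: quot_def)

lemma Q_add: "p \<in> V \<Longrightarrow> q \<in> V \<Longrightarrow> add Q (C p) (C q) = C (padd p q)"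
proof -
  assume p: "p \<in> V" and q: "q \<in> V"
  have "psub (padd (rep (C p)) (rep (C q))) (padd p q) = padd (psub (rep (C p)) p) (psub (rep (C q)) q)"
    by (simp add: psub_def padd_def fun_eq_iff)
  then show ?thesis using rep_cls[OF p] rep_cls[OF q] p q
    by (simp add: quot_def cls_eq KXD_padd I_add)
qed

lemma Q_smul: "p \<in> V \<Longrightarrow> smul Q k (C p) = C (psmul k p)"
proof -
  assume p: "p \<in> V"
  have "psub (psmul k (rep (C p))) (psmul k p) = psmul k (psub (rep (C p)) p)"
    by (simp add: psub_def psmul_def fun_eq_iff algebra_simps)
  then show ?thesis using rep_cls[OF p] p
    by (simp add: quot_def cls_eq KXD_psmul I_smul)
qed

lemma Q_mult: "p \<in> V \<Longrightarrow> q \<in> V \<Longrightarrow> mult Q (C p) (C q) = C (pmul p q)"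
proof -
  assume p: "p \<in> V" and q: "q \<in> V"
  let ?a = "rep (C p)" and ?b = "rep (C q)"
  have "psub (pmul ?a ?b) (pmul p q) = padd (pmul (psub ?a p) ?b) (pmul p (psub ?b q))"
    by (simp add: pmul_psub_left pmul_psub_right) (simp add: psub_def padd_def fun_eq_iff)
  moreover have "padd (pmul (psub ?a p) ?b) (pmul p (psub ?b q)) \<in> I"
    using rep_cls[OF p] rep_cls[OF q] p q by (simp add: I_add I_lmul I_rmul)
  ultimately show ?thesis using rep_cls[OF p] rep_cls[OF q] p q
    by (simp add: quot_def cls_eq KXD_pmul)
qed

lemma Q_der: "p \<in> V \<Longrightarrow> der Q (C p) = C (pD p)"
proof -
  assume p: "p \<in> V"
  have "psub (pD (rep (C p))) (pD p) = pD (psub (rep (C p)) p)"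
    by (simp add: pD_psub)
  then show ?thesis using rep_cls[OF p] p
    by (simp add: quot_def cls_eq KXD_pD I_D)
qed

lemma Q_zero: "zero Q = C pzero"
  by (simp add: quot_def)

lemmas Q_ops = Q_add Q_smul Q_mult Q_der Q_zero

lemma Q_cases: "a \<in> carrier Q \<Longrightarrow> (\<And>p. p \<in> V \<Longrightarrow> a = C p \<Longrightarrow> P) \<Longrightarrow> P"
  by (auto simp: Q_carrier)

lemma C_in: "p \<in> V \<Longrightarrow> C p \<in> carrier Q"
  by (simp add: Q_carrier)

lemma Q_kalgebra: "kalgebra Q"
  unfolding kalgebra_def
proof (intro conjI ballI allI)
  show "zero Q \<in> carrier Q" by (simp add: Q_zero C_in)
next
  fix a b assume "a \<in> carrier Q" "b \<in> carrier Q"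
  then show "add Q a b \<in> carrier Q" "mult Q a b \<in> carrier Q" "add Q a b = add Q b a"
    by (auto elim!: Q_cases simp: Q_ops C_in KXD_closed padd_comm)
next
  fix k a assume "a \<in> carrier Q"
  then show "smul Q k a \<in> carrier Q" by (auto elim!: Q_cases simp: Q_ops C_in KXD_closed)
next
  fix a b c assume "a \<in> carrier Q" "b \<in> carrier Q" "c \<in> carrier Q"
  then show "add Q (add Q a b) c = add Q a (add Q b c)"
    "mult Q (mult Q a b) c = mult Q a (mult Q b c)"
    "mult Q a (add Q b c) = add Q (mult Q a b) (mult Q a c)"
    "mult Q (add Q a b) c = add Q (mult Q a c) (mult Q b c)"
    by (auto elim!: Q_cases simp: Q_ops C_in KXD_closed pmul_assoc pmul_padd_left pmul_padd_right)
      (simp_all add: padd_def add.assoc)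
next
  fix a assume "a \<in> carrier Q"
  then show "add Q (zero Q) a = a" "smul Q 1 a = a"
    by (auto elim!: Q_cases simp: Q_ops C_in KXD_closed)
next
  fix a assume "a \<in> carrier Q"
  then show "\<exists>b\<in>carrier Q. add Q a b = zero Q"
  proof (rule Q_cases)
    fix p assume p: "p \<in> V" "a = C p"
    have "padd p (psmul (-1) p) = pzero" by (simp add: padd_def psmul_def pzero_def fun_eq_iff)
    then show ?thesis using p
      by (intro bexI[of _ "C (psmul (-1) p)"]) (simp_all add: Q_ops C_in KXD_closed)
  qed
next
  fix k a b assume "a \<in> carrier Q" "b \<in> carrier Q"
  then show "smul Q k (add Q a b) = add Q (smul Q k a) (smul Q k b)"
    "smul Q k (mult Q a b) = mult Q (smul Q k a) b"
    "smul Q k (mult Q a b) = mult Q a (smul Q k b)"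
    by (auto elim!: Q_cases simp: Q_ops C_in KXD_closed pmul_psmul_left pmul_psmul_right psmul_padd)
next
  fix k l a assume "a \<in> carrier Q"
  then show "smul Q (k + l) a = add Q (smul Q k a) (smul Q l a)"
    "smul Q (k * l) a = smul Q k (smul Q l a)"
    by (auto elim!: Q_cases simp: Q_ops C_in KXD_closed)
      (simp_all add: padd_def psmul_def algebra_simps fun_eq_iff)
qed

text \<open>The lambda-Leibniz rule holds in the quotient because the Leibniz defects lie in I.\<close>

lemma Q_lda: "lambda_diff_alg lam Q"
  unfolding lambda_diff_alg_def
proof (intro conjI ballI allI Q_kalgebra)
  fix a assume "a \<in> carrier Q"
  then show "der Q a \<in> carrier Q" by (auto elim!: Q_cases simp: Q_ops C_in KXD_closed)
next
  fix a b assume "a \<in> carrier Q" "b \<in> carrier Q"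
  then show "der Q (add Q a b) = add Q (der Q a) (der Q b)"
    by (auto elim!: Q_cases simp: Q_ops C_in KXD_closed pD_padd)
next
  fix k a assume "a \<in> carrier Q"
  then show "der Q (smul Q k a) = smul Q k (der Q a)"
    by (auto elim!: Q_cases simp: Q_ops C_in KXD_closed pD_psmul)
next
  fix a b assume "a \<in> carrier Q" "b \<in> carrier Q"
  then show "der Q (mult Q a b) =
          add Q (add Q (mult Q (der Q a) b) (mult Q a (der Q b)))
                (smul Q lam (mult Q (der Q a) (der Q b)))"
  proof (elim Q_cases)
    fix p q assume p: "p \<in> V" "a = C p" and q: "q \<in> V" "b = C q"
    then show ?thesis
      using I_Leib[OF p(1) q(1)]
      by (simp add: Q_ops C_in KXD_closed cls_eq Leib_def)
  qed
qed

end

lemma diff_quotient_IdT: "lam * mu = 1 \<Longrightarrow> diff_quotient X (IdT X (Tset X mu)) lam"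
  unfolding diff_quotient_def
  using IdT_KXD[OF Tset_KXD]
  by (auto intro: IdT_zero IdT_add IdT_smul IdT_lmul IdT_rmul IdT_D Leib_IdT)

locale lambda_da =
  fixes R :: "('k::comm_ring_1, 'r) kdalg" and lam :: 'k
  assumes lda: "lambda_diff_alg lam R"
begin

abbreviation "CR \<equiv> carrier R"

lemma kal: "kalgebra R"
  using lda unfolding lambda_diff_alg_def by (elim conjE) metis

lemma zero_c[simp]: "zero R \<in> CR"
  using kal unfolding kalgebra_def by (elim conjE) metis
lemma add_c[simp]: "a \<in> CR \<Longrightarrow> b \<in> CR \<Longrightarrow> add R a b \<in> CR"
  using kal unfolding kalgebra_def by (elim conjE) metis
lemma mult_c[simp]: "a \<in> CR \<Longrightarrow> b \<in> CR \<Longrightarrow> mult R a b \<in> CR"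
  using kal unfolding kalgebra_def by (elim conjE) metis
lemma smul_c[simp]: "a \<in> CR \<Longrightarrow> smul R k a \<in> CR"
  using kal unfolding kalgebra_def by (elim conjE) metis
lemma der_c[simp]: "a \<in> CR \<Longrightarrow> der R a \<in> CR"
  using lda unfolding lambda_diff_alg_def by (elim conjE) metis
lemma add_assoc: "a \<in> CR \<Longrightarrow> b \<in> CR \<Longrightarrow> c \<in> CR \<Longrightarrow> add R (add R a b) c = add R a (add R b c)"
  using kal unfolding kalgebra_def by (elim conjE) metis
lemma add_comm: "a \<in> CR \<Longrightarrow> b \<in> CR \<Longrightarrow> add R a b = add R b a"
  using kal unfolding kalgebra_def by (elim conjE) metis
lemma add_lzero[simp]: "a \<in> CR \<Longrightarrow> add R (zero R) a = a"
  using kal unfolding kalgebra_def by (elim conjE) metis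
lemma add_rzero[simp]: "a \<in> CR \<Longrightarrow> add R a (zero R) = a"
  using add_comm add_lzero zero_c by metis
lemma add_neg: "a \<in> CR \<Longrightarrow> \<exists>b\<in>CR. add R a b = zero R"
  using kal unfolding kalgebra_def by (elim conjE) metis
lemma smul_add: "a \<in> CR \<Longrightarrow> b \<in> CR \<Longrightarrow> smul R k (add R a b) = add R (smul R k a) (smul R k b)"
  using kal unfolding kalgebra_def by (elim conjE) metis
lemma add_smul: "a \<in> CR \<Longrightarrow> smul R (k + l) a = add R (smul R k a) (smul R l a)"
  using kal unfolding kalgebra_def by (elim conjE) metis
lemma smul_smul: "a \<in> CR \<Longrightarrow> smul R (k * l) a = smul R k (smul R l a)"
  using kal unfolding kalgebra_def by (elim conjE) metis
lemma smul_one[simp]: "a \<in> CR \<Longrightarrow> smul R 1 a = a"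
  using kal unfolding kalgebra_def by (elim conjE) metis
lemma mult_assoc: "a \<in> CR \<Longrightarrow> b \<in> CR \<Longrightarrow> c \<in> CR \<Longrightarrow> mult R (mult R a b) c = mult R a (mult R b c)"
  using kal unfolding kalgebra_def by (elim conjE) metis
lemma mult_add_right: "a \<in> CR \<Longrightarrow> b \<in> CR \<Longrightarrow> c \<in> CR \<Longrightarrow> mult R a (add R b c) = add R (mult R a b) (mult R a c)"
  using kal unfolding kalgebra_def by (elim conjE) metis
lemma mult_add_left: "a \<in> CR \<Longrightarrow> b \<in> CR \<Longrightarrow> c \<in> CR \<Longrightarrow> mult R (add R a b) c = add R (mult R a c) (mult R b c)"
  using kal unfolding kalgebra_def by (elim conjE) metis
lemma smul_mult_left: "a \<in> CR \<Longrightarrow> b \<in> CR \<Longrightarrow> mult R (smul R k a) b = smul R k (mult R a b)"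
  using kal unfolding kalgebra_def by (elim conjE) metis
lemma smul_mult_right: "a \<in> CR \<Longrightarrow> b \<in> CR \<Longrightarrow> mult R a (smul R k b) = smul R k (mult R a b)"
  using kal unfolding kalgebra_def by (elim conjE) metis
lemma der_add: "a \<in> CR \<Longrightarrow> b \<in> CR \<Longrightarrow> der R (add R a b) = add R (der R a) (der R b)"
  using lda unfolding lambda_diff_alg_def by (elim conjE) metis
lemma der_smul: "a \<in> CR \<Longrightarrow> der R (smul R k a) = smul R k (der R a)"
  using lda unfolding lambda_diff_alg_def by (elim conjE) metis
lemma der_mult: "a \<in> CR \<Longrightarrow> b \<in> CR \<Longrightarrow> der R (mult R a b) =
          add R (add R (mult R (der R a) b) (mult R a (der R b)))
                (smul R lam (mult R (der R a) (der R b)))"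
  using lda unfolding lambda_diff_alg_def by (elim conjE) metis

lemma idem_zero: "a \<in> CR \<Longrightarrow> add R a a = a \<Longrightarrow> a = zero R"
proof -
  assume a: "a \<in> CR" and e: "add R a a = a"
  obtain b where b: "b \<in> CR" "add R a b = zero R" using add_neg[OF a] by blast
  have "add R (add R a a) b = add R a (add R a b)" using a b by (simp add: add_assoc)
  then show ?thesis using e b a by simp
qed

lemma smul_zero_k[simp]: "a \<in> CR \<Longrightarrow> smul R 0 a = zero R"
  using add_smul[of a 0 0] by (intro idem_zero) auto
lemma smul_zero_r[simp]: "smul R k (zero R) = zero R"
  using smul_add[of "zero R" "zero R" k] by (intro idem_zero) auto
lemma mult_zero_l[simp]: "a \<in> CR \<Longrightarrow> mult R (zero R) a = zero R"
  using mult_add_left[of "zero R" "zero R" a] by (intro idem_zero) auto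
lemma mult_zero_r[simp]: "a \<in> CR \<Longrightarrow> mult R a (zero R) = zero R"
  using mult_add_right[of a "zero R" "zero R"] by (intro idem_zero) auto
lemma der_zero[simp]: "der R (zero R) = zero R"
  using der_add[of "zero R" "zero R"] by (intro idem_zero) auto

lemma add_negself: "a \<in> CR \<Longrightarrow> add R a (smul R (-1) a) = zero R"
  using add_smul[of a 1 "-1"] by simp

lemma eq_from_diff: "a \<in> CR \<Longrightarrow> b \<in> CR \<Longrightarrow> add R a (smul R (-1) b) = zero R \<Longrightarrow> a = b"
proof -
  assume a: "a \<in> CR" and b: "b \<in> CR" and d: "add R a (smul R (-1) b) = zero R"
  have "add R (add R a (smul R (-1) b)) b = add R a (add R (smul R (-1) b) b)"
    using a b by (simp add: add_assoc)
  also have "add R (smul R (-1) b) b = zero R"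
    using b add_negself add_comm by (metis smul_c)
  finally show ?thesis using d a b by simp
qed

lemma dhom_zero:
  assumes A: "kalgebra A" and h: "dhom A R h"
  shows "h (zero A) = zero R"
proof (rule idem_zero)
  have z: "zero A \<in> carrier A"
    using A unfolding kalgebra_def by blast
  then have zz: "add A (zero A) (zero A) = zero A"
    using A unfolding kalgebra_def by (elim conjE) metis
  show "h (zero A) \<in> CR" using h z unfolding dhom_def by blast
  show "add R (h (zero A)) (h (zero A)) = h (zero A)"
    using h z zz unfolding dhom_def by metis
qed

definition rsuml :: "'r list \<Rightarrow> 'r" where
  "rsuml xs = foldr (add R) xs (zero R)"

lemma rsuml_simps[simp]: "rsuml [] = zero R" "rsuml (a # xs) = add R a (rsuml xs)"
  by (simp_all add: rsuml_def)

lemma rsuml_c[simp]: "set xs \<subseteq> CR \<Longrightarrow> rsuml xs \<in> CR"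
  by (induction xs) auto

lemma rsuml_append: "set xs \<subseteq> CR \<Longrightarrow> set ys \<subseteq> CR \<Longrightarrow> rsuml (xs @ ys) = add R (rsuml xs) (rsuml ys)"
  by (induction xs) (auto simp: add_assoc)

lemma rsuml_perm: "distinct xs \<Longrightarrow> distinct ys \<Longrightarrow> set xs = set ys \<Longrightarrow> G ` set xs \<subseteq> CR \<Longrightarrow> rsuml (map G xs) = rsuml (map G ys)"
proof (induction xs arbitrary: ys)
  case Nil then show ?case by simp
next
  case (Cons a xs)
  have "a \<in> set ys" using Cons.prems by auto
  then obtain ys1 ys2 where ys: "ys = ys1 @ a # ys2" by (meson split_list)
  have m: "set xs = set (ys1 @ ys2)" using Cons.prems ys by auto
  have d: "distinct (ys1 @ ys2)" using Cons.prems ys by auto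
  have c: "G ` set ys \<subseteq> CR" using Cons.prems by auto
  then have c1: "set (map G ys1) \<subseteq> CR" "set (map G ys2) \<subseteq> CR" "G a \<in> CR" using ys by auto
  have "rsuml (map G ys) = add R (rsuml (map G ys1)) (add R (G a) (rsuml (map G ys2)))"
    using ys c1 by (simp add: rsuml_append)
  also have "\<dots> = add R (G a) (add R (rsuml (map G ys1)) (rsuml (map G ys2)))"
    using c1 by (metis add_assoc add_comm rsuml_c)
  also have "\<dots> = add R (G a) (rsuml (map G xs))"
  proof -
    have "G ` set xs \<subseteq> CR" using m c1 by auto
    then show ?thesis using Cons.IH[OF _ d m] Cons.prems c1 by (simp add: rsuml_append)
  qed
  finally show ?case by simp
qed

lemma rsuml_filter:
  assumes "\<forall>x\<in>set xs. \<not> P x \<longrightarrow> g x = zero R" "\<forall>x\<in>set xs. g x \<in> CR"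
  shows "rsuml (map g (filter P xs)) = rsuml (map g xs)"
  using assms
proof (induction xs)
  case Nil then show ?case by simp
next
  case (Cons a xs)
  have c: "rsuml (map g xs) \<in> CR" using Cons.prems by (auto intro!: rsuml_c)
  show ?case
  proof (cases "P a")
    case True then show ?thesis using Cons by simp
  next
    case False then show ?thesis using Cons c by simp
  qed
qed

lemma rsuml_map_add:
  assumes "\<forall>x\<in>set xs. g x \<in> CR \<and> h x \<in> CR"
  shows "rsuml (map (\<lambda>x. add R (g x) (h x)) xs) = add R (rsuml (map g xs)) (rsuml (map h xs))"
  using assms
proof (induction xs)
  case Nil then show ?case by simp
next
  case (Cons a xs)
  let ?G = "rsuml (map g xs)" and ?H = "rsuml (map h xs)"
  have c: "g a \<in> CR" "h a \<in> CR" "?G \<in> CR" "?H \<in> CR" using Cons.prems by (auto intro!: rsuml_c)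
  have "add R (add R (g a) (h a)) (add R ?G ?H) = add R (add R (g a) ?G) (add R (h a) ?H)"
    using c by (metis add_assoc add_comm add_c)
  then show ?case using Cons by simp
qed

lemma rsuml_map_smul:
  assumes "\<forall>x\<in>set xs. g x \<in> CR"
  shows "rsuml (map (\<lambda>x. smul R k (g x)) xs) = smul R k (rsuml (map g xs))"
  using assms
proof (induction xs)
  case Nil then show ?case by simp
next
  case (Cons a xs)
  have c: "rsuml (map g xs) \<in> CR" using Cons.prems by (auto intro!: rsuml_c)
  then show ?case using Cons by (simp add: smul_add)
qed

end

section \<open>Evaluation in a lambda-differential algebra\<close>

fun eval_l :: "('k, 'r, 'z) kdalg_scheme \<Rightarrow> ('x \<Rightarrow> 'r) \<Rightarrow> 'x letter \<Rightarrow> 'r"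
and eval_w :: "('k, 'r, 'z) kdalg_scheme \<Rightarrow> ('x \<Rightarrow> 'r) \<Rightarrow> 'x letter list \<Rightarrow> 'r" where
  "eval_l R f (Lx x) = f x"
| "eval_l R f (LD w) = der R (eval_w R f w)"
| "eval_w R f [] = zero R"
| "eval_w R f [a] = eval_l R f a"
| "eval_w R f (a # b # r) = mult R (eval_l R f a) (eval_w R f (b # r))"

lemma eval_w_Cons: "v \<noteq> [] \<Longrightarrow> eval_w R f (a # v) = mult R (eval_l R f a) (eval_w R f v)"
  by (cases v) auto

text \<open>The evaluation context: R is a lambda-differential algebra, f maps X into R, and
  mu is the inverse of lambda (needed to relate T to Leibniz defects).\<close>

locale evaluation = lambda_da R lam for R :: "('k::comm_ring_1, 'r) kdalg" and lam +
  fixes f :: "'x \<Rightarrow> 'r" and X :: "'x set" and mu :: 'k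
  assumes inv: "lam * mu = 1" and fX: "\<And>x. x \<in> X \<Longrightarrow> f x \<in> carrier R"
begin

lemma eval_w_c: "w \<in> frakS X \<Longrightarrow> eval_w R f w \<in> CR"
proof (induction w rule: frakS_induct)
  case (cons a v)
  then show ?case by (auto simp: eval_w_Cons frakS_def)
qed (simp_all add: fX)

lemma eval_w_append:
  "u \<in> frakS X \<Longrightarrow> v \<in> frakS X \<Longrightarrow> eval_w R f (u @ v) = mult R (eval_w R f u) (eval_w R f v)"
proof (induction u)
  case (Cons a u)
  show ?case
  proof (cases "u = []")
    case True then show ?thesis using Cons by (simp add: eval_w_Cons frakS_def)
  next
    case False
    then have a: "[a] \<in> frakS X" and u: "u \<in> frakS X" using Cons.prems by (auto simp: frakS_def)
    have "eval_w R f ((a # u) @ v) = mult R (eval_w R f [a]) (mult R (eval_w R f u) (eval_w R f v))"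
      using Cons u False by (simp add: eval_w_Cons frakS_def)
    also have "\<dots> = mult R (mult R (eval_w R f [a]) (eval_w R f u)) (eval_w R f v)"
      using eval_w_c[OF a] eval_w_c[OF u] eval_w_c[OF Cons.prems(2)] by (simp add: mult_assoc)
    finally show ?thesis using False by (simp add: eval_w_Cons)
  qed
qed (simp add: frakS_def)

text \<open>Evaluation of polynomials: the linear extension, computed as a finite sum over an
  enumeration of the support (any duplicate-free enumeration of a superset gives the same value).\<close>

definition eval_p :: "('x,'k) poly \<Rightarrow> 'r" where
  "eval_p p = rsuml (map (\<lambda>w. smul R (p w) (eval_w R f w)) (SOME ws. distinct ws \<and> set ws = {w. p w \<noteq> 0}))"

lemma eval_p_eq:
  assumes p: "p \<in> KXD X" and ws: "distinct ws" "{w. p w \<noteq> 0} \<subseteq> set ws" "set ws \<subseteq> frakS X"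
  shows "eval_p p = rsuml (map (\<lambda>w. smul R (p w) (eval_w R f w)) ws)"
proof -
  let ?G = "\<lambda>w. smul R (p w) (eval_w R f w)"
  let ?S = "{w. p w \<noteq> 0}"
  have fin: "finite ?S" using p by (simp add: KXD_iff)
  have ex: "\<exists>ws. distinct ws \<and> set ws = ?S" using finite_distinct_list[OF fin] by blast
  define E where "E = (SOME ws. distinct ws \<and> set ws = ?S)"
  have E: "distinct E" "set E = ?S" using someI_ex[OF ex] by (auto simp: E_def)
  have SfS: "?S \<subseteq> frakS X" using p by (auto simp: KXD_iff)
  have "rsuml (map ?G ws) = rsuml (map ?G (filter (\<lambda>w. w \<in> ?S) ws))"
    using ws by (intro rsuml_filter[symmetric]) (auto simp: eval_w_c)
  also have "\<dots> = rsuml (map ?G E)"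
    using ws E SfS by (intro rsuml_perm) (auto simp: eval_w_c)
  finally show ?thesis by (simp add: eval_p_def E_def)
qed

lemma support_enum:
  assumes "finite S" "S \<subseteq> frakS X"
  shows "\<exists>ws. distinct ws \<and> set ws = S \<and> set ws \<subseteq> frakS X"
  using finite_distinct_list[OF assms(1)] assms(2) by blast

lemma eval_p_c: "p \<in> KXD X \<Longrightarrow> eval_p p \<in> CR"
proof -
  assume p: "p \<in> KXD X"
  then obtain ws where ws: "distinct ws" "set ws = {w. p w \<noteq> 0}" "set ws \<subseteq> frakS X"
    using support_enum[of "{w. p w \<noteq> 0}"] by (auto simp: KXD_iff)
  have "\<forall>w\<in>set ws. smul R (p w) (eval_w R f w) \<in> CR" using ws by (auto intro!: smul_c eval_w_c)
  then show ?thesis using eval_p_eq[OF p ws(1) _ ws(3)] ws by (auto intro!: rsuml_c)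
qed

lemma eval_p_add: "p \<in> KXD X \<Longrightarrow> q \<in> KXD X \<Longrightarrow> eval_p (padd p q) = add R (eval_p p) (eval_p q)"
proof -
  assume p: "p \<in> KXD X" and q: "q \<in> KXD X"
  have fin: "finite ({w. p w \<noteq> 0} \<union> {w. q w \<noteq> 0})" using p q by (simp add: KXD_iff)
  have sub: "{w. p w \<noteq> 0} \<union> {w. q w \<noteq> 0} \<subseteq> frakS X" using p q by (auto simp: KXD_iff)
  obtain ws where ws: "distinct ws" "set ws = {w. p w \<noteq> 0} \<union> {w. q w \<noteq> 0}" "set ws \<subseteq> frakS X"
    using support_enum[OF fin sub] by blast
  have "eval_p (padd p q) = rsuml (map (\<lambda>w. smul R (p w + q w) (eval_w R f w)) ws)"
    using ws by (subst eval_p_eq[OF KXD_padd[OF p q] ws(1) _ ws(3)]) (auto simp: padd_def)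
  also have "\<dots> = rsuml (map (\<lambda>w. add R (smul R (p w) (eval_w R f w)) (smul R (q w) (eval_w R f w))) ws)"
    using ws by (intro arg_cong[where f=rsuml] map_cong) (auto simp: add_smul eval_w_c)
  also have "\<dots> = add R (eval_p p) (eval_p q)"
    using ws by (subst rsuml_map_add) (auto simp: eval_w_c eval_p_eq[OF p ws(1) _ ws(3)] eval_p_eq[OF q ws(1) _ ws(3)])
  finally show ?thesis .
qed

lemma eval_p_smul: "p \<in> KXD X \<Longrightarrow> eval_p (psmul k p) = smul R k (eval_p p)"
proof -
  assume p: "p \<in> KXD X"
  obtain ws where ws: "distinct ws" "set ws = {w. p w \<noteq> 0}" "set ws \<subseteq> frakS X"
    using support_enum[of "{w. p w \<noteq> 0}"] p by (auto simp: KXD_iff)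
  have "eval_p (psmul k p) = rsuml (map (\<lambda>w. smul R (k * p w) (eval_w R f w)) ws)"
    using ws by (subst eval_p_eq[OF KXD_psmul[OF p] ws(1) _ ws(3)]) (auto simp: psmul_def)
  also have "\<dots> = rsuml (map (\<lambda>w. smul R k (smul R (p w) (eval_w R f w))) ws)"
    using ws by (intro arg_cong[where f=rsuml] map_cong) (auto simp: smul_smul eval_w_c)
  also have "\<dots> = smul R k (eval_p p)"
    using ws by (subst rsuml_map_smul) (auto simp: eval_w_c eval_p_eq[OF p ws(1) _ ws(3)])
  finally show ?thesis .
qed

lemma eval_p_zero: "eval_p pzero = zero R"
proof -
  have "eval_p pzero = rsuml (map (\<lambda>w. smul R (pzero w) (eval_w R f w)) [])"
    apply (rule eval_p_eq) apply (rule KXD_pzero) by (auto simp: pzero_def)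
  then show ?thesis by simp
qed

lemma eval_p_mono: "w \<in> frakS X \<Longrightarrow> eval_p (pmono w) = eval_w R f w"
proof -
  assume w: "w \<in> frakS X"
  have "eval_p (pmono w) = rsuml (map (\<lambda>v. smul R (pmono w v) (eval_w R f v)) [w])"
    apply (rule eval_p_eq) apply (rule KXD_pmono[OF w]) by (auto simp: pmono_def w)
  then show ?thesis using w by (simp add: pmono_def eval_w_c)
qed

lemma eval_p_sub: "p \<in> KXD X \<Longrightarrow> q \<in> KXD X \<Longrightarrow> eval_p (psub p q) = add R (eval_p p) (smul R (-1) (eval_p q))"
  by (simp add: psub_as_padd eval_p_add eval_p_smul KXD_psmul)

lemma eval_p_mult_mono: "q \<in> KXD X \<Longrightarrow> w \<in> frakS X \<Longrightarrow> eval_p (pmul (pmono w) q) = mult R (eval_w R f w) (eval_p q)"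
proof (induction q rule: poly_induct)
  case zero then show ?case by (simp add: eval_p_zero eval_w_c)
next
  case (step k w' q)
  have "eval_p (pmul (pmono w) (padd (psmul k (pmono w')) q)) = add R (smul R k (eval_w R f (w @ w'))) (eval_p (pmul (pmono w) q))"
    using step by (simp add: pmul_padd_right pmul_psmul_right eval_p_add eval_p_smul KXD_closed frakS_append eval_p_mono)
  also have "\<dots> = add R (smul R k (mult R (eval_w R f w) (eval_w R f w'))) (mult R (eval_w R f w) (eval_p q))"
    using step by (simp add: eval_w_append)
  also have "\<dots> = mult R (eval_w R f w) (eval_p (padd (psmul k (pmono w')) q))"
    using step by (simp add: eval_p_add eval_p_smul KXD_closed eval_p_mono mult_add_right smul_mult_right eval_w_c eval_p_c)
  finally show ?case .
qed

lemma eval_p_mult: "p \<in> KXD X \<Longrightarrow> q \<in> KXD X \<Longrightarrow> eval_p (pmul p q) = mult R (eval_p p) (eval_p q)"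
proof (induction p rule: poly_induct)
  case zero then show ?case by (simp add: eval_p_zero eval_p_c)
next
  case (step k w p)
  have "eval_p (pmul (padd (psmul k (pmono w)) p) q) = add R (smul R k (eval_p (pmul (pmono w) q))) (eval_p (pmul p q))"
    using step by (simp add: pmul_padd_left pmul_psmul_left eval_p_add eval_p_smul KXD_closed)
  also have "\<dots> = mult R (eval_p (padd (psmul k (pmono w)) p)) (eval_p q)"
    using step by (simp add: eval_p_mult_mono eval_p_add eval_p_smul KXD_closed eval_p_mono mult_add_left smul_mult_left eval_w_c eval_p_c)
  finally show ?case .
qed

lemma eval_p_D: "p \<in> KXD X \<Longrightarrow> eval_p (pD p) = der R (eval_p p)"
proof (induction p rule: poly_induct)
  case zero then show ?case by (simp add: eval_p_zero)
next
  case (step k w p)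
  have wD: "[LD w] \<in> frakS X" using step by (simp add: frakS_LD)
  show ?case
    using step wD by (simp add: pD_padd pD_psmul eval_p_add eval_p_smul KXD_closed eval_p_mono der_add der_smul eval_w_c eval_p_c)
qed

lemma eval_p_Leib: "p \<in> KXD X \<Longrightarrow> q \<in> KXD X \<Longrightarrow> eval_p (Leib lam p q) = zero R"
  unfolding Leib_def
  by (simp add: eval_p_sub eval_p_add eval_p_smul eval_p_mult eval_p_D KXD_closed eval_p_c der_mult[symmetric] add_negself)

lemma eval_p_T: "t \<in> Tset X mu \<Longrightarrow> eval_p t = zero R"
proof -
  assume "t \<in> Tset X mu"
  then obtain x y where xy: "x \<in> frakS X" "y \<in> frakS X" "t = tT mu x y"
    unfolding Tset_def tT_def by blast
  then show ?thesis by (simp add: tT_Leib[OF inv] eval_p_smul KXD_closed KXD_Leib eval_p_Leib)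
qed

lemma eval_p_gen: "g \<in> IdT_gen X (Tset X mu) \<Longrightarrow> eval_p g = zero R"
proof -
  assume "g \<in> IdT_gen X (Tset X mu)"
  then obtain u t where g: "g = subst_word t u" "u \<in> frakS (starX X)" "nstar_word u = 1" "t \<in> Tset X mu"
    by (auto simp: IdT_gen_def)
  have tK: "t \<in> KXD X" using g Tset_KXD by blast
  interpret star_kill eval_p "mult R" "der R" "zero R" X t
    by unfold_locales (auto simp: eval_p_mult eval_p_D eval_p_c tK eval_p_T g)
  show ?thesis using word_kill g by simp
qed

lemma eval_p_IdT: "p \<in> IdT X (Tset X mu) \<Longrightarrow> eval_p p = zero R"
  unfolding IdT_eq_span
proof (induction p rule: kspan.induct)
  case kspan_zero then show ?case by (simp add: eval_p_zero)
next
  case (kspan_step p q k)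
  have "p \<in> KXD X" "q \<in> KXD X"
    using kspan_step IdT_gen_KXD[OF Tset_KXD] kspan_subset[of q "IdT_gen X (Tset X mu)" X] by auto
  then show ?case using kspan_step by (simp add: eval_p_add eval_p_smul KXD_closed eval_p_gen)
qed

end

section \<open>K<X;D|T> is free on X\<close>

context diff_quotient
begin

text \<open>Uniqueness: a homomorphism out of the quotient is determined by the images of the
  generators, since classes of words are built from them by products and D, and every
  class is a linear combination of classes of words.\<close>

lemma dhom_unique:
  assumes R: "lambda_diff_alg lam R" and h1: "dhom Q R h1" and h2: "dhom Q R h2"
    and on_X: "\<And>x. x \<in> X \<Longrightarrow> h1 (C (pmono [Lx x])) = h2 (C (pmono [Lx x]))"
    and a: "a \<in> carrier Q"
  shows "h1 a = h2 a"
proof -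
  interpret R: lambda_da R lam by unfold_locales (rule R)
  have words: "h1 (C (pmono w)) = h2 (C (pmono w))" if "w \<in> frakS X" for w
    using that
  proof (induction w rule: frakS_induct)
    case (gen x) then show ?case by (rule on_X)
  next
    case (bracket u)
    then have "C (pmono [LD u]) = der Q (C (pmono u))" by (simp add: Q_ops KXD_pmono)
    then show ?case using bracket h1 h2 unfolding dhom_def by (metis C_in KXD_pmono)
  next
    case (cons b v)
    then have "C (pmono (b # v)) = mult Q (C (pmono [b])) (C (pmono v))" by (simp add: Q_ops KXD_pmono)
    then show ?case using cons h1 h2 unfolding dhom_def by (metis C_in KXD_pmono)
  qed
  have "h1 (C p) = h2 (C p)" if "p \<in> KXD X" for p
    using that
  proof (induction p rule: poly_induct)
    case zero then show ?case using R.dhom_zero[OF Q_kalgebra h1] R.dhom_zero[OF Q_kalgebra h2] Q_zero by simp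
  next
    case (step k w q)
    have e: "C (padd (psmul k (pmono w)) q) = add Q (smul Q k (C (pmono w))) (C q)"
      using step by (simp add: Q_ops KXD_closed)
    have c: "C (pmono w) \<in> carrier Q" "C q \<in> carrier Q" "smul Q k (C (pmono w)) \<in> carrier Q"
      using step by (auto simp: C_in KXD_closed Q_ops)
    show ?case using e c step words[OF step(1)] h1 h2 unfolding dhom_def by metis
  qed
  then show ?thesis using a by (auto simp: Q_carrier)
qed

end

text \<open>Existence: evaluation in R kills Id(T), hence is well defined on classes, and it is a
  homomorphism because evaluation of polynomials is.\<close>

lemma free_exist:
  assumes inv: "lam * mu = 1" and R: "lambda_diff_alg lam R" and f: "\<forall>x\<in>X. f x \<in> carrier R"
  shows "\<exists>h. dhom (KXDT X mu) R h \<and> (\<forall>x\<in>X. h (cls X (IdT X (Tset X mu)) (pmono [Lx x])) = f x)"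
proof -
  interpret q: diff_quotient X "IdT X (Tset X mu)" lam by (rule diff_quotient_IdT[OF inv])
  interpret u: evaluation R lam f X mu
    by unfold_locales (auto simp: R inv f)
  let ?h = "\<lambda>C. u.eval_p (rep C)"
  have hC: "p \<in> KXD X \<Longrightarrow> ?h (q.C p) = u.eval_p p" for p
  proof -
    assume p: "p \<in> KXD X"
    have r: "rep (q.C p) \<in> KXD X" "psub (rep (q.C p)) p \<in> IdT X (Tset X mu)" using q.rep_cls[OF p] by auto
    then have "u.eval_p (psub (rep (q.C p)) p) = zero R" by (simp add: u.eval_p_IdT)
    then show ?thesis using r p by (simp add: u.eval_p_sub u.eval_p_c u.eq_from_diff)
  qed
  have "dhom q.Q R ?h"
    unfolding dhom_def
  proof (intro conjI ballI allI)
    fix a assume "a \<in> carrier q.Q"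
    then show "?h a \<in> carrier R" "?h (der q.Q a) = der R (?h a)"
      by (auto elim!: q.Q_cases simp: hC q.Q_ops KXD_closed u.eval_p_c u.eval_p_D)
  next
    fix k a assume "a \<in> carrier q.Q"
    then show "?h (smul q.Q k a) = smul R k (?h a)"
      by (auto elim!: q.Q_cases simp: hC q.Q_ops KXD_closed u.eval_p_smul)
  next
    fix a b assume "a \<in> carrier q.Q" "b \<in> carrier q.Q"
    then show "?h (add q.Q a b) = add R (?h a) (?h b)" "?h (mult q.Q a b) = mult R (?h a) (?h b)"
      by (auto elim!: q.Q_cases simp: hC q.Q_ops KXD_closed u.eval_p_add u.eval_p_mult)
  qed
  moreover have "\<forall>x\<in>X. ?h (q.C (pmono [Lx x])) = f x"
    by (auto simp: hC KXD_pmono frakS_def u.eval_p_mono)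
  ultimately show ?thesis unfolding KXDT_def by blast
qed

lemma free_part:
  fixes X :: "'x set" and lam mu :: "'k::comm_ring_1"
  assumes inv: "lam * mu = 1"
  shows "free_lda TYPE('r) lam (KXDT X mu) X (\<lambda>x. cls X (IdT X (Tset X mu)) (pmono [Lx x]))"
proof -
  interpret q: diff_quotient X "IdT X (Tset X mu)" lam by (rule diff_quotient_IdT[OF inv])
  show ?thesis
    unfolding free_lda_def
  proof (intro conjI allI impI ballI)
    show "lambda_diff_alg lam (KXDT X mu)" unfolding KXDT_def by (rule q.Q_lda)
  next
    fix x assume "x \<in> X"
    then show "q.C (pmono [Lx x]) \<in> carrier (KXDT X mu)"
      unfolding KXDT_def by (auto intro!: q.C_in KXD_pmono simp: frakS_def)
  next
    fix R :: "('k, 'r) kdalg" and f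
    assume a: "lambda_diff_alg lam R \<and> (\<forall>x\<in>X. f x \<in> carrier R)"
    then show "\<exists>h. dhom (KXDT X mu) R h \<and> (\<forall>x\<in>X. h (q.C (pmono [Lx x])) = f x)"
      using free_exist[OF inv] by blast
  next
    fix R :: "('k, 'r) kdalg" and f h1 h2 a
    assume a: "lambda_diff_alg lam R \<and> (\<forall>x\<in>X. f x \<in> carrier R)"
      and hh: "dhom (KXDT X mu) R h1 \<and> dhom (KXDT X mu) R h2 \<and> (\<forall>x\<in>X. h1 (q.C (pmono [Lx x])) = f x) \<and>
          (\<forall>x\<in>X. h2 (q.C (pmono [Lx x])) = f x)"
      and aa: "a \<in> carrier (KXDT X mu)"
    show "h1 a = h2 a"
      using q.dhom_unique[of R h1 h2 a] a hh aa unfolding KXDT_def by metis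
  qed
qed

section \<open>Good words and the set Phi(X)\<close>

fun isD :: "'x letter \<Rightarrow> bool" where
  "isD (LD _) = True"
| "isD (Lx _) = False"

fun noDD :: "'x letter list \<Rightarrow> bool" where
  "noDD (a # b # r) = (\<not> (isD a \<and> isD b) \<and> noDD (b # r))"
| "noDD _ = True"

fun goodl :: "'x letter \<Rightarrow> bool" where
  "goodl (Lx x) = True"
| "goodl (LD w) = (list_all goodl w \<and> noDD w)"

definition goodw :: "'x letter list \<Rightarrow> bool" where
  "goodw w = (list_all goodl w \<and> noDD w)"

definition goodS :: "'x set \<Rightarrow> 'x letter list set" where
  "goodS X = {w \<in> frakS X. goodw w}"

lemma noDD_Cons: "noDD (a # w) \<longleftrightarrow> noDD w \<and> (w \<noteq> [] \<longrightarrow> \<not> (isD a \<and> isD (hd w)))"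
  by (cases w) auto

lemma noDD_append: "noDD (u @ v) \<longleftrightarrow> noDD u \<and> noDD v \<and> \<not> (u \<noteq> [] \<and> v \<noteq> [] \<and> isD (last u) \<and> isD (hd v))"
  by (induction u rule: induct_list012) (auto simp: noDD_Cons)

lemma goodw_append: "goodw (u @ v) \<longleftrightarrow> goodw u \<and> goodw v \<and> \<not> (u \<noteq> [] \<and> v \<noteq> [] \<and> isD (last u) \<and> isD (hd v))"
  by (auto simp: goodw_def noDD_append)

lemma goodw_Lx[simp]: "goodw [Lx x]"
  by (simp add: goodw_def)
lemma goodw_Cons: "goodw (a # w) \<longleftrightarrow> goodl a \<and> goodw w \<and> (w \<noteq> [] \<longrightarrow> \<not> (isD a \<and> isD (hd w)))"
  by (auto simp: goodw_def noDD_Cons)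

fun ddeg_l :: "'x letter \<Rightarrow> nat" where
  "ddeg_l (Lx x) = 0"
| "ddeg_l (LD w) = Suc (sum_list (map ddeg_l w))"

definition ddeg :: "'x letter list \<Rightarrow> nat" where
  "ddeg w = sum_list (map ddeg_l w)"

lemma ddeg_append[simp]: "ddeg (u @ v) = ddeg u + ddeg v" by (simp add: ddeg_def)
lemma ddeg_Cons[simp]: "ddeg (a # v) = ddeg_l a + ddeg v" by (simp add: ddeg_def)
lemma ddeg_Nil[simp]: "ddeg [] = 0" by (simp add: ddeg_def)
lemma ddeg_LD[simp]: "ddeg_l (LD w) = Suc (ddeg w)" by (simp add: ddeg_def)

fun size_l :: "'x letter \<Rightarrow> nat" where
  "size_l (Lx x) = 1"
| "size_l (LD w) = Suc (sum_list (map size_l w))"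

inductive_set Yblocks :: "'x letter list set \<Rightarrow> 'x letter list set \<Rightarrow> 'x letter list set" for Y Z where
  Yb_Y: "y \<in> Y \<Longrightarrow> y \<in> Yblocks Y Z"
| Yb_YD: "y \<in> Y \<Longrightarrow> z \<in> Z \<Longrightarrow> y @ [LD z] \<in> Yblocks Y Z"
| Yb_YDY: "y \<in> Y \<Longrightarrow> z \<in> Z \<Longrightarrow> s \<in> Yblocks Y Z \<Longrightarrow> y @ LD z # s \<in> Yblocks Y Z"

lemma catsetI: "a \<in> A \<Longrightarrow> b \<in> B \<Longrightarrow> a @ b \<in> catset A B"
  by (auto simp: catset_def)
lemma DZI: "z \<in> Z \<Longrightarrow> [LD z] \<in> DZ Z"
  by (auto simp: DZ_def)

lemma catset_iff: "x \<in> catset A B \<longleftrightarrow> (\<exists>a b. x = a @ b \<and> a \<in> A \<and> b \<in> B)"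
  by (auto simp: catset_def)
lemma DZ_iff: "x \<in> DZ Z \<longleftrightarrow> (\<exists>z. x = [LD z] \<and> z \<in> Z)"
  by (auto simp: DZ_def)

lemma setpow_YD: "s \<in> setpow (catset Y (DZ Z)) r \<Longrightarrow> s = [] \<or> s \<in> Yblocks Y Z"
proof (induction r arbitrary: s)
  case 0 then show ?case by simp
next
  case (Suc r)
  then obtain y z s' where s: "s = (y @ [LD z]) @ s'" "y \<in> Y" "z \<in> Z" "s' \<in> setpow (catset Y (DZ Z)) r"
    by (auto simp: catset_iff DZ_iff)
  then show ?case using Suc.IH[OF s(4)] by (auto intro: Yblocks.intros)
qed

lemma setpow_YD_Suc: "s \<in> setpow (catset Y (DZ Z)) (Suc r) \<Longrightarrow> s \<in> Yblocks Y Z"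
proof -
  assume "s \<in> setpow (catset Y (DZ Z)) (Suc r)"
  then obtain y z s' where s: "s = (y @ [LD z]) @ s'" "y \<in> Y" "z \<in> Z" "s' \<in> setpow (catset Y (DZ Z)) r"
    by (auto simp: catset_iff DZ_iff)
  then show ?thesis using setpow_YD[OF s(4)] by (auto intro: Yblocks.intros)
qed

lemma setpow_YD_Y: "s \<in> setpow (catset Y (DZ Z)) r \<Longrightarrow> y \<in> Y \<Longrightarrow> s @ y \<in> Yblocks Y Z"
proof (induction r arbitrary: s)
  case 0 then show ?case by (auto intro: Yblocks.intros)
next
  case (Suc r)
  then obtain y' z s' where s: "s = (y' @ [LD z]) @ s'" "y' \<in> Y" "z \<in> Z" "s' \<in> setpow (catset Y (DZ Z)) r"
    by (auto simp: catset_iff DZ_iff)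
  then show ?case using Suc.IH[OF s(4) Suc.prems(2)] by (auto intro: Yblocks.intros)
qed

lemma setpow_DY_C: "s \<in> setpow (catset (DZ Z) Y) r \<Longrightarrow> y \<in> Y \<Longrightarrow> y @ s \<in> Yblocks Y Z"
proof (induction r arbitrary: s y)
  case 0 then show ?case by (auto intro: Yblocks.intros)
next
  case (Suc r)
  then obtain y' z s' where s: "s = ([LD z] @ y') @ s'" "y' \<in> Y" "z \<in> Z" "s' \<in> setpow (catset (DZ Z) Y) r"
    by (auto simp: catset_iff DZ_iff)
  then show ?case using Suc.IH[OF s(4) s(2)] Suc.prems(2) Yb_YDY[of y Y z Z "y' @ s'"] by simp
qed

lemma setpow_DY_D: "s \<in> setpow (catset (DZ Z) Y) r \<Longrightarrow> y \<in> Y \<Longrightarrow> z \<in> Z \<Longrightarrow> y @ s @ [LD z] \<in> Yblocks Y Z"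
proof (induction r arbitrary: s y)
  case 0 then show ?case by (auto intro: Yblocks.intros)
next
  case (Suc r)
  then obtain y' z' s' where s: "s = ([LD z'] @ y') @ s'" "y' \<in> Y" "z' \<in> Z" "s' \<in> setpow (catset (DZ Z) Y) r"
    by (auto simp: catset_iff DZ_iff)
  then show ?case using Suc.IH[OF s(4) s(2) Suc.prems(3)] Suc.prems(2) Yb_YDY[of y Y z' Z "y' @ s' @ [LD z]"] by simp
qed

lemma setpow_snoc: "t \<in> setpow A r \<Longrightarrow> a \<in> A \<Longrightarrow> t @ a \<in> setpow A (Suc r)"
proof (induction r arbitrary: t)
  case 0 then show ?case by (auto simp: catset_iff)
next
  case (Suc r)
  then obtain b t' where t: "t = b @ t'" "b \<in> A" "t' \<in> setpow A r" by (auto simp: catset_iff)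
  then show ?case using Suc.IH[OF t(3) Suc.prems(2)] by (auto simp: catset_iff)
qed

lemma setpow_YD_rotate: "s \<in> setpow (catset Y (DZ Z)) r \<Longrightarrow> z \<in> Z \<Longrightarrow>
    \<exists>t z'. [LD z] @ s = t @ [LD z'] \<and> t \<in> setpow (catset (DZ Z) Y) r \<and> z' \<in> Z"
proof (induction r arbitrary: s z)
  case 0 then show ?case by auto
next
  case (Suc r)
  then obtain y z1 s' where s: "s = (y @ [LD z1]) @ s'" "y \<in> Y" "z1 \<in> Z" "s' \<in> setpow (catset Y (DZ Z)) r"
    by (auto simp: catset_iff DZ_iff)
  obtain t' z' where t': "[LD z1] @ s' = t' @ [LD z']" "t' \<in> setpow (catset (DZ Z) Y) r" "z' \<in> Z"
    using Suc.IH[OF s(4) s(3)] by blast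
  have "[LD z] @ s = (([LD z] @ y) @ t') @ [LD z']" using s t' by simp
  moreover have "([LD z] @ y) @ t' \<in> setpow (catset (DZ Z) Y) (Suc r)"
    using t' s Suc.prems(2) by (simp only: setpow.simps) (intro catsetI DZI)
  ultimately show ?case using t' by blast
qed

lemma Yblocks_setpow:
  "s \<in> Yblocks Y Z \<Longrightarrow> (\<exists>r\<ge>1. s \<in> setpow (catset Y (DZ Z)) r) \<or> (\<exists>r. s \<in> catset (setpow (catset Y (DZ Z)) r) Y)"
proof (induction s rule: Yblocks.induct)
  case (Yb_Y y) then show ?case by (intro disjI2 exI[of _ 0]) (auto simp: catset_iff)
next
  case (Yb_YD y z) then show ?case by (intro disjI1 exI[of _ 1]) (auto simp: catset_iff DZ_iff)
next
  case (Yb_YDY y z s)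
  then show ?case
  proof (elim disjE exE conjE)
    fix r assume "r \<ge> 1" "s \<in> setpow (catset Y (DZ Z)) r"
    then have "(y @ [LD z]) @ s \<in> setpow (catset Y (DZ Z)) (Suc r)"
      using Yb_YDY by (simp only: setpow.simps) (intro catsetI DZI)
    then show ?thesis by (intro disjI1 exI[of _ "Suc r"]) simp
  next
    fix r assume "s \<in> catset (setpow (catset Y (DZ Z)) r) Y"
    then obtain t y' where "s = t @ y'" "t \<in> setpow (catset Y (DZ Z)) r" "y' \<in> Y" by (auto simp: catset_iff)
    then have "y @ LD z # s = ((y @ [LD z]) @ t) @ y'" "(y @ [LD z]) @ t \<in> setpow (catset Y (DZ Z)) (Suc r)"
      using Yb_YDY by (simp, simp only: setpow.simps, intro catsetI DZI)
    then have "y @ LD z # s \<in> catset (setpow (catset Y (DZ Z)) (Suc r)) Y"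
      using \<open>y' \<in> Y\<close> by (simp only:) (intro catsetI)
    then show ?thesis by blast
  qed
qed

lemma LambdaD_subset: "LambdaD Y Z \<subseteq> Yblocks Y Z \<union> DZ Z \<union> catset (DZ Z) (Yblocks Y Z)"
proof
  fix s assume "s \<in> LambdaD Y Z"
  then consider (a) r where "r \<ge> 1" "s \<in> setpow (catset Y (DZ Z)) r"
    | (b) r where "s \<in> catset (setpow (catset Y (DZ Z)) r) Y"
    | (c) r where "r \<ge> 1" "s \<in> setpow (catset (DZ Z) Y) r"
    | (d) r where "s \<in> catset (setpow (catset (DZ Z) Y) r) (DZ Z)"
    unfolding LambdaD_def by blast
  then show "s \<in> Yblocks Y Z \<union> DZ Z \<union> catset (DZ Z) (Yblocks Y Z)"
  proof cases
    case (a r)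
    then obtain n where "r = Suc n" by (cases r) auto
    then show ?thesis using a setpow_YD_Suc by blast
  next
    case (b r)
    then obtain t y where "s = t @ y" "t \<in> setpow (catset Y (DZ Z)) r" "y \<in> Y" by (auto simp: catset_iff)
    then show ?thesis using setpow_YD_Y by blast
  next
    case (c r)
    then obtain n where n: "r = Suc n" by (cases r) auto
    then obtain z y s' where s: "s = ([LD z] @ y) @ s'" "y \<in> Y" "z \<in> Z" "s' \<in> setpow (catset (DZ Z) Y) n"
      using c by (auto simp: catset_iff DZ_iff)
    then have "y @ s' \<in> Yblocks Y Z" using setpow_DY_C by blast
    then have "[LD z] @ (y @ s') \<in> catset (DZ Z) (Yblocks Y Z)" using s by (intro catsetI DZI)
    then show ?thesis using s by simp
  next
    case (d r)
    then obtain t z where s: "s = t @ [LD z]" "t \<in> setpow (catset (DZ Z) Y) r" "z \<in> Z"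
      by (auto simp: catset_iff DZ_iff)
    show ?thesis
    proof (cases r)
      case 0 then show ?thesis using s by (auto simp: DZ_iff)
    next
      case (Suc n)
      then obtain z' y s' where t: "t = ([LD z'] @ y) @ s'" "y \<in> Y" "z' \<in> Z" "s' \<in> setpow (catset (DZ Z) Y) n"
        using s by (auto simp: catset_iff DZ_iff)
      then have "y @ s' @ [LD z] \<in> Yblocks Y Z" using setpow_DY_D s by blast
      then have "[LD z'] @ (y @ s' @ [LD z]) \<in> catset (DZ Z) (Yblocks Y Z)" using t by (intro catsetI DZI)
      then show ?thesis using s t by simp
    qed
  qed
qed

lemma LambdaD_supset: "Yblocks Y Z \<union> DZ Z \<union> catset (DZ Z) (Yblocks Y Z) \<subseteq> LambdaD Y Z"
proof
  fix s assume "s \<in> Yblocks Y Z \<union> DZ Z \<union> catset (DZ Z) (Yblocks Y Z)"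
  then consider (a) "s \<in> Yblocks Y Z" | (b) "s \<in> DZ Z" | (c) z s' where "s = [LD z] @ s'" "z \<in> Z" "s' \<in> Yblocks Y Z"
    by (auto simp: catset_iff DZ_iff)
  then show "s \<in> LambdaD Y Z"
  proof cases
    case a then show ?thesis using Yblocks_setpow[of s] unfolding LambdaD_def by auto
  next
    case b
    then have "s \<in> catset (setpow (catset (DZ Z) Y) 0) (DZ Z)" by (auto simp: catset_iff)
    then show ?thesis unfolding LambdaD_def by blast
  next
    case c
    from Yblocks_setpow[OF c(3)] show ?thesis
    proof (elim disjE exE conjE)
      fix r assume r: "r \<ge> 1" "s' \<in> setpow (catset Y (DZ Z)) r"
      obtain t z' where "[LD z] @ s' = t @ [LD z']" "t \<in> setpow (catset (DZ Z) Y) r" "z' \<in> Z"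
        using setpow_YD_rotate[OF r(2) c(2)] by blast
      then have "s \<in> catset (setpow (catset (DZ Z) Y) r) (DZ Z)" using c by (auto simp: catset_iff DZ_iff)
      then show ?thesis unfolding LambdaD_def by blast
    next
      fix r assume "s' \<in> catset (setpow (catset Y (DZ Z)) r) Y"
      then obtain t y where ty: "s' = t @ y" "t \<in> setpow (catset Y (DZ Z)) r" "y \<in> Y" by (auto simp: catset_iff)
      obtain t' z' where t': "[LD z] @ t = t' @ [LD z']" "t' \<in> setpow (catset (DZ Z) Y) r" "z' \<in> Z"
        using setpow_YD_rotate[OF ty(2) c(2)] by blast
      have "s = t' @ ([LD z'] @ y)" using c ty t' by simp
      moreover have "[LD z'] @ y \<in> catset (DZ Z) Y" using t' ty by (intro catsetI DZI)
      ultimately have "s \<in> setpow (catset (DZ Z) Y) (Suc r)" using setpow_snoc t' by blast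
      then have "\<exists>r'\<in>{1..}. s \<in> setpow (catset (DZ Z) Y) r'" by (intro bexI[of _ "Suc r"]) auto
      then show ?thesis unfolding LambdaD_def by blast
    qed
  qed
qed

lemma LambdaD_eq: "LambdaD Y Z = Yblocks Y Z \<union> DZ Z \<union> catset (DZ Z) (Yblocks Y Z)"
  using LambdaD_subset LambdaD_supset by blast

lemma Sg_good: "y \<in> Sg X \<Longrightarrow> y \<in> goodS X \<and> y \<noteq> [] \<and> \<not> isD (hd y) \<and> \<not> isD (last y)"
proof -
  assume y: "y \<in> Sg X"
  then have ne: "y \<noteq> []" and s: "set y \<subseteq> Lx ` X" by (auto simp: Sg_def)
  have nd: "\<forall>a\<in>set y. \<not> isD a" using s by auto
  have "noDD y" using nd by (induction y rule: induct_list012) auto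
  moreover have "list_all goodl y" using s by (auto simp: list_all_iff)
  moreover have "list_all (wfl X) y" using s by (auto simp: list_all_iff)
  ultimately show ?thesis using ne nd by (auto simp: goodS_def goodw_def frakS_def)
qed

lemma goodS_LD: "z \<in> goodS X \<Longrightarrow> [LD z] \<in> goodS X"
  by (auto simp: goodS_def frakS_def goodw_def)

lemma goodS_append: "u \<in> goodS X \<Longrightarrow> v \<in> goodS X \<Longrightarrow> \<not> (isD (last u) \<and> isD (hd v)) \<Longrightarrow> u @ v \<in> goodS X"
  by (auto simp: goodS_def goodw_append frakS_append)

lemma goodS_ne: "u \<in> goodS X \<Longrightarrow> u \<noteq> []"
  by (auto simp: goodS_def frakS_def)

lemma Yblocks_good: "s \<in> Yblocks (Sg X) Z \<Longrightarrow> Z \<subseteq> goodS X \<Longrightarrow> s \<in> goodS X \<and> \<not> isD (hd s)"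
proof (induction s rule: Yblocks.induct)
  case (Yb_Y y) then show ?case using Sg_good by blast
next
  case (Yb_YD y z)
  then show ?case using Sg_good[OF Yb_YD(1)] goodS_LD[of z X]
    by (auto intro!: goodS_append)
next
  case (Yb_YDY y z s)
  have "y @ [LD z] \<in> goodS X" using Yb_YDY Sg_good[OF Yb_YDY(1)] goodS_LD[of z X]
    by (auto intro!: goodS_append)
  then have "(y @ [LD z]) @ s \<in> goodS X" using Yb_YDY by (intro goodS_append[of "y @ [LD z]"]) auto
  then show ?case using Sg_good[OF Yb_YDY(1)] by simp
qed

lemma LambdaD_good: "Z \<subseteq> goodS X \<Longrightarrow> LambdaD (Sg X) Z \<subseteq> goodS X"
proof
  fix s assume Z: "Z \<subseteq> goodS X" and "s \<in> LambdaD (Sg X) Z"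
  then consider (a) "s \<in> Yblocks (Sg X) Z" | (b) z where "s = [LD z]" "z \<in> Z"
    | (c) z s' where "s = [LD z] @ s'" "z \<in> Z" "s' \<in> Yblocks (Sg X) Z"
    unfolding LambdaD_eq by (auto simp: catset_iff DZ_iff)
  then show "s \<in> goodS X"
  proof cases
    case a then show ?thesis using Yblocks_good Z by blast
  next
    case b then show ?thesis using Z goodS_LD by blast
  next
    case c
    have "[LD z] @ s' \<in> goodS X" using c Z goodS_LD Yblocks_good[OF c(3) Z] by (intro goodS_append) auto
    then show ?thesis using c by simp
  qed
qed

lemma PhiN_good: "PhiN X n \<subseteq> goodS X"
proof (induction n)
  case 0 then show ?case using Sg_good by auto
next
  case (Suc n) then show ?case by (simp add: LambdaD_good)
qed

lemma DZ_mono: "Z \<subseteq> Z' \<Longrightarrow> DZ Z \<subseteq> DZ Z'"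
  by (auto simp: DZ_def)
lemma catset_mono: "A \<subseteq> A' \<Longrightarrow> B \<subseteq> B' \<Longrightarrow> catset A B \<subseteq> catset A' B'"
  by (auto simp: catset_def)
lemma Yblocks_mono: "Z \<subseteq> Z' \<Longrightarrow> Yblocks Y Z \<subseteq> Yblocks Y Z'"
  by (rule subsetI, erule Yblocks.induct) (auto intro: Yblocks.intros)

lemma LambdaD_mono: "Z \<subseteq> Z' \<Longrightarrow> LambdaD Y Z \<subseteq> LambdaD Y Z'"
  unfolding LambdaD_eq by (intro Un_mono catset_mono DZ_mono Yblocks_mono)

lemma PhiN_Suc_mono: "PhiN X n \<subseteq> PhiN X (Suc n)"
proof (induction n)
  case 0 then show ?case by (auto simp: LambdaD_eq intro: Yb_Y)
next
  case (Suc n) then show ?case by (simp add: LambdaD_mono)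
qed

lemma PhiN_mono: "m \<le> n \<Longrightarrow> PhiN X m \<subseteq> PhiN X n"
  by (rule lift_Suc_mono_le[of "PhiN X"]) (rule PhiN_Suc_mono)

lemma Yblocks_intro:
  "noDD w \<Longrightarrow> w \<noteq> [] \<Longrightarrow> \<not> isD (hd w) \<Longrightarrow> (\<forall>a\<in>set w. (\<exists>x\<in>X. a = Lx x) \<or> (\<exists>z\<in>Z. a = LD z))
    \<Longrightarrow> w \<in> Yblocks (Sg X) Z"
proof (induction "length w" arbitrary: w rule: less_induct)
  case less
  define y where "y = takeWhile (\<lambda>a. \<not> isD a) w"
  define rest where "rest = dropWhile (\<lambda>a. \<not> isD a) w"
  have w: "w = y @ rest" by (simp add: y_def rest_def)
  have yne: "y \<noteq> []" using less.prems(2,3) by (cases w) (auto simp: y_def)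
  have ySg: "y \<in> Sg X"
  proof -
    have "\<forall>a\<in>set y. \<not> isD a \<and> a \<in> set w" by (auto simp: y_def dest: set_takeWhileD)
    then have "set y \<subseteq> Lx ` X" using less.prems(4) by fastforce
    then show ?thesis using yne by (simp add: Sg_def)
  qed
  show ?case
  proof (cases rest)
    case Nil then show ?thesis using w ySg by (auto intro: Yb_Y)
  next
    case (Cons a rest')
    have "isD a" using Cons hd_dropWhile[of "\<lambda>a. \<not> isD a" w] by (simp add: rest_def)
    then obtain z where a: "a = LD z" by (cases a) auto
    have zZ: "z \<in> Z" using less.prems(4) w Cons a by auto
    show ?thesis
    proof (cases "rest' = []")
      case True then show ?thesis using w Cons a ySg zZ by (auto intro: Yb_YD)
    next
      case False
      have nd: "noDD (LD z # rest')" using less.prems(1) w Cons a by (simp add: noDD_append)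
      then have "noDD rest'" "\<not> isD (hd rest')" using False by (auto simp: noDD_Cons)
      moreover have "length rest' < length w" using w Cons by simp
      moreover have "\<forall>a\<in>set rest'. (\<exists>x\<in>X. a = Lx x) \<or> (\<exists>z\<in>Z. a = LD z)"
        using less.prems(4) w Cons by auto
      ultimately have "rest' \<in> Yblocks (Sg X) Z" using less.hyps False by blast
      then show ?thesis using w Cons a ySg zZ by (auto intro: Yb_YDY)
    qed
  qed
qed

lemma good_letters: "w \<in> goodS X \<Longrightarrow> a \<in> set w \<Longrightarrow> (\<exists>x\<in>X. a = Lx x) \<or> (\<exists>z. a = LD z \<and> z \<in> goodS X)"
  by (cases a) (auto simp: goodS_def goodw_def frakS_def list_all_iff)

lemma good_in_LambdaD:
  assumes w: "w \<in> goodS X" and Zw: "\<forall>z. LD z \<in> set w \<longrightarrow> z \<in> Z"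
  shows "w \<in> LambdaD (Sg X) Z"
proof -
  have letters: "\<forall>a\<in>set w. (\<exists>x\<in>X. a = Lx x) \<or> (\<exists>z\<in>Z. a = LD z)"
    using good_letters[OF w] Zw by fastforce
  have nd: "noDD w" using w by (simp add: goodS_def goodw_def)
  obtain a w' where aw: "w = a # w'" using goodS_ne[OF w] by (cases w) auto
  show ?thesis
  proof (cases "isD a")
    case False
    then have "w \<in> Yblocks (Sg X) Z" using nd letters aw by (intro Yblocks_intro) auto
    then show ?thesis unfolding LambdaD_eq by blast
  next
    case True
    then obtain z where a: "a = LD z" by (cases a) auto
    have z: "z \<in> Z" using Zw aw a by auto
    show ?thesis
    proof (cases "w' = []")
      case True then show ?thesis using aw a z unfolding LambdaD_eq by (auto simp: DZ_iff)
    next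
      case False
      have "noDD w'" "\<not> isD (hd w')" using nd aw a False by (auto simp: noDD_Cons)
      then have "w' \<in> Yblocks (Sg X) Z" using letters aw False by (intro Yblocks_intro) auto
      then have "[LD z] @ w' \<in> catset (DZ Z) (Yblocks (Sg X) Z)" using z by (intro catsetI DZI)
      then show ?thesis using aw a unfolding LambdaD_eq by auto
    qed
  qed
qed

lemma size_l_pos: "size_l a > 0" by (cases a) auto

lemma size_l_member: "a \<in> set w \<Longrightarrow> size_l a \<le> sum_list (map size_l w)"
  by (induction w) auto

lemma common_N:
  assumes "\<forall>z. LD z \<in> set w \<longrightarrow> (\<exists>n. z \<in> PhiN X n)"
  shows "\<exists>N. \<forall>z. LD z \<in> set w \<longrightarrow> z \<in> PhiN X N"
  using assms
proof (induction w)
  case Nil then show ?case by simp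
next
  case (Cons a w)
  then obtain N where N: "\<forall>z. LD z \<in> set w \<longrightarrow> z \<in> PhiN X N" by auto
  show ?case
  proof (cases a)
    case (Lx x) then show ?thesis using N by auto
  next
    case (LD z)
    then obtain n where n: "z \<in> PhiN X n" using Cons.prems by auto
    have "\<forall>z'. LD z' \<in> set (a # w) \<longrightarrow> z' \<in> PhiN X (max N n)"
      using N n LD PhiN_mono[of N "max N n" X] PhiN_mono[of n "max N n" X] by auto
    then show ?thesis by blast
  qed
qed

lemma good_in_Phi: "w \<in> goodS X \<Longrightarrow> \<exists>n. w \<in> PhiN X n"
proof (induction "sum_list (map size_l w)" arbitrary: w rule: less_induct)
  case less
  have "\<forall>z. LD z \<in> set w \<longrightarrow> (\<exists>n. z \<in> PhiN X n)"
  proof (intro allI impI)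
    fix z assume z: "LD z \<in> set w"
    then have zg: "z \<in> goodS X" using good_letters[OF less.prems z] by auto
    have lt: "sum_list (map size_l z) < sum_list (map size_l w)" using size_l_member[OF z] by simp
    show "\<exists>n. z \<in> PhiN X n" by (rule less.hyps[OF lt zg])
  qed
  then obtain N where "\<forall>z. LD z \<in> set w \<longrightarrow> z \<in> PhiN X N" using common_N by blast
  then have "w \<in> PhiN X (Suc N)" using good_in_LambdaD[OF less.prems] by simp
  then show ?case by blast
qed

lemma Phi_eq: "Phi X = goodS X"
proof
  show "Phi X \<subseteq> goodS X" unfolding Phi_def using PhiN_good by (intro UN_least) auto
  show "goodS X \<subseteq> Phi X"
  proof
    fix w assume "w \<in> goodS X"
    then obtain n where "w \<in> PhiN X n" using good_in_Phi by blast
    then show "w \<in> Phi X" unfolding Phi_def by blast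
  qed
qed

section \<open>Good words span K<X;D|T>\<close>

fun plist :: "('x letter list \<times> 'k::comm_ring_1) list \<Rightarrow> ('x,'k) poly" where
  "plist [] = pzero"
| "plist ((w,k) # ps) = padd (psmul k (pmono w)) (plist ps)"

lemma plist_KXD: "fst ` set ps \<subseteq> frakS X \<Longrightarrow> plist ps \<in> KXD X"
  by (induction ps rule: plist.induct) (auto intro!: KXD_closed)

lemma plist_append: "plist (ps @ qs) = padd (plist ps) (plist qs)"
  by (induction ps rule: plist.induct) (auto simp: padd_def pzero_def fun_eq_iff add.assoc)

lemma plist_smul: "psmul c (plist ps) = plist (map (\<lambda>(w,k). (w, c * k)) ps)"
  by (induction ps rule: plist.induct) (auto simp: padd_def psmul_def pzero_def fun_eq_iff algebra_simps)

lemma plist_D: "pD (plist ps) = plist (map (\<lambda>(w,k). ([LD w], k)) ps)"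
  by (induction ps rule: plist.induct) (auto simp: pD_padd pD_psmul)

definition lmul_w :: "'x letter list \<Rightarrow> ('x,'k::comm_ring_1) poly \<Rightarrow> ('x,'k) poly" where
  "lmul_w u p = (if u = [] then p else pmul (pmono u) p)"
definition rmul_w :: "'x letter list \<Rightarrow> ('x,'k::comm_ring_1) poly \<Rightarrow> ('x,'k) poly" where
  "rmul_w v p = (if v = [] then p else pmul p (pmono v))"

lemma lmul_w_mono[simp]: "lmul_w u (pmono w) = pmono (u @ w)" by (simp add: lmul_w_def)
lemma rmul_w_mono[simp]: "rmul_w v (pmono w) = pmono (w @ v)" by (simp add: rmul_w_def)
lemma lmul_w_lin: "lmul_w u (padd p q) = padd (lmul_w u p) (lmul_w u q)" "lmul_w u (psmul k p) = psmul k (lmul_w u p)"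
    "lmul_w u (psub p q) = psub (lmul_w u p) (lmul_w u q)"
  by (simp_all add: lmul_w_def pmul_padd_right pmul_psmul_right pmul_psub_right)
lemma rmul_w_lin: "rmul_w u (padd p q) = padd (rmul_w u p) (rmul_w u q)" "rmul_w u (psmul k p) = psmul k (rmul_w u p)"
    "rmul_w u (psub p q) = psub (rmul_w u p) (rmul_w u q)"
  by (simp_all add: rmul_w_def pmul_padd_left pmul_psmul_left pmul_psub_left)

declare ddeg_l.simps(2)[simp del]

lemma good_split_last:
  assumes g: "g \<in> goodS X" and d: "isD (last g)"
  obtains g' x where "g = g' @ [LD x]" "x \<in> goodS X" "g' = [] \<or> (g' \<in> goodS X \<and> \<not> isD (last g'))"
proof -
  have ne: "g \<noteq> []" using goodS_ne[OF g] .
  obtain x where lx: "last g = LD x" using d by (cases "last g") auto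
  define g' where "g' = butlast g"
  have gs: "g = g' @ [LD x]" using ne lx append_butlast_last_id[of g] by (simp add: g'_def)
  have "LD x \<in> set g" using gs by simp
  then have x: "x \<in> goodS X" using good_letters[OF g] by auto
  have gw: "goodw g'" "\<not> (g' \<noteq> [] \<and> isD (last g'))" using g gs by (auto simp: goodS_def goodw_append)
  have "g' \<noteq> [] \<Longrightarrow> g' \<in> frakS X" using g gs by (auto simp: goodS_def frakS_def)
  then have "g' = [] \<or> (g' \<in> goodS X \<and> \<not> isD (last g'))" using gw by (auto simp: goodS_def)
  then show ?thesis using that gs x by blast
qed

lemma good_split_first:
  assumes h: "h \<in> goodS X" and d: "isD (hd h)"
  obtains y h' where "h = LD y # h'" "y \<in> goodS X" "h' = [] \<or> (h' \<in> goodS X \<and> \<not> isD (hd h'))"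
proof -
  have ne: "h \<noteq> []" using goodS_ne[OF h] .
  obtain y h' where hs: "h = LD y # h'" using d ne by (cases h; cases "hd h") auto
  have "LD y \<in> set h" using hs by simp
  then have y: "y \<in> goodS X" using good_letters[OF h] by auto
  have gw: "goodw h'" "\<not> (h' \<noteq> [] \<and> isD (hd h'))" using h hs by (auto simp: goodS_def goodw_Cons)
  have "h' \<noteq> [] \<Longrightarrow> h' \<in> frakS X" using h hs by (auto simp: goodS_def frakS_def)
  then have "h' = [] \<or> (h' \<in> goodS X \<and> \<not> isD (hd h'))" using gw by (auto simp: goodS_def)
  then show ?thesis using that hs y by blast
qed

lemma goodS_cat1: "x \<in> goodS X \<Longrightarrow> g' = [] \<or> (g' \<in> goodS X \<and> \<not> isD (last g')) \<Longrightarrow> g' @ x \<in> goodS X"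
  by (auto intro: goodS_append)
lemma goodS_cat2: "y \<in> goodS X \<Longrightarrow> h' = [] \<or> (h' \<in> goodS X \<and> \<not> isD (hd h')) \<Longrightarrow> y @ h' \<in> goodS X"
  by (auto intro: goodS_append)

locale reduction =
  fixes X :: "'x set" and mu :: "'k::comm_ring_1"
begin

abbreviation "I \<equiv> IdT X (Tset X mu)"
abbreviation "V \<equiv> (KXD X :: ('x,'k) poly set)"

definition good_comb :: "nat \<Rightarrow> ('x,'k) poly set" where
  "good_comb n = {plist ps | ps. \<forall>(w,k)\<in>set ps. w \<in> goodS X \<and> ddeg w \<le> n}"

definition red :: "nat \<Rightarrow> ('x,'k) poly set" where
  "red n = {p \<in> V. \<exists>s\<in>good_comb n. psub p s \<in> I}"

lemma red_add: "p \<in> red n \<Longrightarrow> q \<in> red n \<Longrightarrow> padd p q \<in> red n"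
proof -
  assume "p \<in> red n" "q \<in> red n"
  then obtain ps qs where p: "p \<in> V" "\<forall>(w,k)\<in>set ps. w \<in> goodS X \<and> ddeg w \<le> n" "psub p (plist ps) \<in> I"
    and q: "q \<in> V" "\<forall>(w,k)\<in>set qs. w \<in> goodS X \<and> ddeg w \<le> n" "psub q (plist qs) \<in> I"
    by (auto simp: red_def good_comb_def)
  have "psub (padd p q) (plist (ps @ qs)) = padd (psub p (plist ps)) (psub q (plist qs))"
    by (simp add: plist_append psub_def padd_def fun_eq_iff)
  then have "psub (padd p q) (plist (ps @ qs)) \<in> I" using p q by (simp add: IdT_add)
  moreover have "plist (ps @ qs) \<in> good_comb n" using p q unfolding good_comb_def by (intro CollectI exI[of _ "ps @ qs"]) auto
  ultimately show ?thesis using p q unfolding red_def by (auto intro: KXD_padd)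
qed

lemma red_smul: "p \<in> red n \<Longrightarrow> psmul c p \<in> red n"
proof -
  assume "p \<in> red n"
  then obtain ps where p: "p \<in> V" "\<forall>(w,k)\<in>set ps. w \<in> goodS X \<and> ddeg w \<le> n" "psub p (plist ps) \<in> I"
    by (auto simp: red_def good_comb_def)
  have "psub (psmul c p) (psmul c (plist ps)) = psmul c (psub p (plist ps))"
    by (simp add: psub_def psmul_def fun_eq_iff algebra_simps)
  then have "psub (psmul c p) (plist (map (\<lambda>(w,k). (w, c * k)) ps)) \<in> I"
    using p by (simp add: IdT_smul plist_smul)
  moreover have "plist (map (\<lambda>(w,k). (w, c * k)) ps) \<in> good_comb n" using p unfolding good_comb_def
    by (intro CollectI exI[of _ "map (\<lambda>(w,k). (w, c * k)) ps"]) auto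
  ultimately show ?thesis using p unfolding red_def by (auto intro: KXD_psmul)
qed

lemma red_zero: "pzero \<in> red n"
proof -
  have "plist [] \<in> good_comb n" unfolding good_comb_def by (intro CollectI exI[of _ "[]"]) simp
  moreover have "psub pzero (plist []) \<in> I" by (simp add: psub_self IdT_zero)
  ultimately show ?thesis unfolding red_def by auto
qed

lemma good_comb_mono: "m \<le> n \<Longrightarrow> good_comb m \<subseteq> good_comb n"
  unfolding good_comb_def by fastforce

lemma red_mono: "m \<le> n \<Longrightarrow> p \<in> red m \<Longrightarrow> p \<in> red n"
  unfolding red_def using good_comb_mono by blast

lemma red_I: "p \<in> V \<Longrightarrow> q \<in> red n \<Longrightarrow> psub p q \<in> I \<Longrightarrow> p \<in> red n"
proof -
  assume p: "p \<in> V" and "q \<in> red n" and d: "psub p q \<in> I"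
  then obtain s where s: "s \<in> good_comb n" "psub q s \<in> I" by (auto simp: red_def)
  have "psub p s = padd (psub p q) (psub q s)" by (simp add: psub_def padd_def fun_eq_iff)
  then have "psub p s \<in> I" using d s by (simp add: IdT_add)
  then show ?thesis using p s unfolding red_def by auto
qed

lemma red_good: "w \<in> goodS X \<Longrightarrow> ddeg w \<le> n \<Longrightarrow> pmono w \<in> red n"
proof -
  assume w: "w \<in> goodS X" "ddeg w \<le> n"
  have "plist [(w, 1)] \<in> good_comb n" unfolding good_comb_def using w by (intro CollectI exI[of _ "[(w,1)]"]) simp
  moreover have "psub (pmono w) (plist [(w,1)]) \<in> I"
    by (simp add: psub_self IdT_zero)
  moreover have "pmono w \<in> V" using w KXD_pmono[of w X] by (simp add: goodS_def)
  ultimately show ?thesis unfolding red_def by auto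
qed

lemma red_D: "p \<in> red n \<Longrightarrow> pD p \<in> red (Suc n)"
proof -
  assume "p \<in> red n"
  then obtain ps where p: "p \<in> V" "\<forall>(w,k)\<in>set ps. w \<in> goodS X \<and> ddeg w \<le> n" "psub p (plist ps) \<in> I"
    by (auto simp: red_def good_comb_def)
  have "psub (pD p) (plist (map (\<lambda>(w,k). ([LD w], k)) ps)) \<in> I"
    using p by (simp add: plist_D[symmetric] pD_psub[symmetric] IdT_D)
  moreover have "plist (map (\<lambda>(w,k). ([LD w], k)) ps) \<in> good_comb (Suc n)"
    using p unfolding good_comb_def
    by (intro CollectI exI[of _ "map (\<lambda>(w,k). ([LD w], k)) ps"]) (auto intro: goodS_LD simp: ddeg_def)
  ultimately show ?thesis using p unfolding red_def by (auto intro: KXD_pD)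
qed

lemma lmul_w_I: "u = [] \<or> u \<in> frakS X \<Longrightarrow> p \<in> I \<Longrightarrow> lmul_w u p \<in> I"
  by (auto simp: lmul_w_def intro: IdT_lmul KXD_pmono)
lemma rmul_w_I: "u = [] \<or> u \<in> frakS X \<Longrightarrow> p \<in> I \<Longrightarrow> rmul_w u p \<in> I"
  by (auto simp: rmul_w_def intro: IdT_rmul KXD_pmono)

lemma lmul_w_red:
  assumes IH: "\<And>m' n' p q. m' + n' < N \<Longrightarrow> p \<in> red m' \<Longrightarrow> q \<in> red n' \<Longrightarrow> pmul p q \<in> red (m' + n')"
    and g: "g' = [] \<or> (g' \<in> goodS X \<and> \<not> isD (last g'))" and P: "P \<in> red k" and lt: "ddeg g' + k < N"
  shows "lmul_w g' P \<in> red (ddeg g' + k)"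
proof (cases "g' = []")
  case True then show ?thesis using P by (simp add: lmul_w_def)
next
  case False
  then have "pmono g' \<in> red (ddeg g')" using g by (auto intro: red_good)
  then show ?thesis using IH[OF lt _ P] False by (simp add: lmul_w_def)
qed

lemma rmul_w_red:
  assumes IH: "\<And>m' n' p q. m' + n' < N \<Longrightarrow> p \<in> red m' \<Longrightarrow> q \<in> red n' \<Longrightarrow> pmul p q \<in> red (m' + n')"
    and h: "h' = [] \<or> (h' \<in> goodS X \<and> \<not> isD (hd h'))" and P: "P \<in> red k" and lt: "k + ddeg h' < N"
  shows "rmul_w h' P \<in> red (k + ddeg h')"
proof (cases "h' = []")
  case True then show ?thesis using P by (simp add: rmul_w_def)
next
  case False
  then have "pmono h' \<in> red (ddeg h')" using h by (auto intro: red_good)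
  then show ?thesis using IH[OF lt P] False by (simp add: rmul_w_def)
qed

text \<open>The key rewriting step: modulo Id(T),
    g' D(x) D(y) h' = -mu g' D(x) y h' - mu g' x D(y) h' + mu g' D(xy) h',
  which is the element g' (tT x y) h' of Id(T) rearranged.\<close>

lemma DD_reduction:
  assumes g': "g' = [] \<or> g' \<in> frakS X" and h': "h' = [] \<or> h' \<in> frakS X"
    and x: "x \<in> frakS X" and y: "y \<in> frakS X"
  shows "psub (pmono (g' @ LD x # LD y # h'))
           (padd (psmul (- mu) (pmono (g' @ LD x # y @ h')))
             (padd (psmul (- mu) (pmono (g' @ x @ LD y # h')))
               (psmul mu (lmul_w g' (rmul_w h' (pD (pmono (x @ y))))))))
         \<in> I"
proof -
  have "lmul_w g' (rmul_w h' (tT mu x y)) \<in> I"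
    using g' h' x y by (intro lmul_w_I rmul_w_I IdT_T tT_Tset) auto
  moreover have "lmul_w g' (rmul_w h' (tT mu x y)) =
      psub (padd (padd (pmono (g' @ LD x # LD y # h')) (psmul mu (pmono (g' @ LD x # y @ h'))))
             (psmul mu (pmono (g' @ x @ LD y # h'))))
        (psmul mu (lmul_w g' (rmul_w h' (pD (pmono (x @ y))))))"
    by (simp add: tT_def lmul_w_lin rmul_w_lin)
  ultimately show ?thesis
    by (simp add: fun_eq_iff psub_def padd_def psmul_def algebra_simps)
qed

text \<open>A product g h of good words meeting in two D-letters, g = g' D(x), h = D(y) h':
  by DD_reduction it is congruent to terms with fewer D's, each of which reduces by the
  induction hypothesis on the total D-degree.\<close>

lemma red_mul_DD:
  assumes IH: "\<And>m' n' p q. m' + n' < m + n \<Longrightarrow> p \<in> red m' \<Longrightarrow> q \<in> red n' \<Longrightarrow> pmul p q \<in> red (m' + n')"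
    and gx: "g = g' @ [LD x]" "x \<in> goodS X" "g' = [] \<or> (g' \<in> goodS X \<and> \<not> isD (last g'))"
    and hy: "h = LD y # h'" "y \<in> goodS X" "h' = [] \<or> (h' \<in> goodS X \<and> \<not> isD (hd h'))"
    and g: "g \<in> goodS X" "ddeg g \<le> m" and h: "h \<in> goodS X" "ddeg h \<le> n"
  shows "pmono (g @ h) \<in> red (m + n)"
proof -
  have dg: "ddeg g = ddeg g' + Suc (ddeg x)" and dh: "ddeg h = Suc (ddeg y) + ddeg h'"
    using gx hy by simp_all
  have A: "pmono (g' @ LD x # y @ h') \<in> red (m + n)"
  proof -
    have "pmul (pmono g) (pmono (y @ h')) \<in> red (m + (n - 1))"
      using goodS_cat2[OF hy(2,3)] g h dh by (intro IH red_good) auto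
    then show ?thesis using gx red_mono[of "m + (n - 1)" "m + n"] by simp
  qed
  have B: "pmono (g' @ x @ LD y # h') \<in> red (m + n)"
  proof -
    have "pmul (pmono (g' @ x)) (pmono h) \<in> red ((m - 1) + n)"
      using goodS_cat1[OF gx(2,3)] g h dg by (intro IH red_good) auto
    then show ?thesis using hy red_mono[of "(m - 1) + n" "m + n"] by simp
  qed
  have C: "lmul_w g' (rmul_w h' (pD (pmono (x @ y)))) \<in> red (m + n)"
  proof -
    have "pmul (pmono x) (pmono y) \<in> red (ddeg x + ddeg y)"
      using gx hy g h dg dh by (intro IH red_good) (auto simp: goodS_def)
    then have "pD (pmono (x @ y)) \<in> red (Suc (ddeg x + ddeg y))" by (simp add: red_D del: pD_pmono)
    then have "rmul_w h' (pD (pmono (x @ y))) \<in> red (Suc (ddeg x + ddeg y) + ddeg h')"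
      using g h dg dh by (intro rmul_w_red[OF IH hy(3)]) auto
    then have "lmul_w g' (rmul_w h' (pD (pmono (x @ y)))) \<in> red (ddeg g' + (Suc (ddeg x + ddeg y) + ddeg h'))"
      using g h dg dh by (intro lmul_w_red[OF IH gx(3)]) auto
    then show ?thesis by (rule red_mono[rotated]) (use g h dg dh in auto)
  qed
  define S where "S = padd (psmul (- mu) (pmono (g' @ LD x # y @ h')))
    (padd (psmul (- mu) (pmono (g' @ x @ LD y # h'))) (psmul mu (lmul_w g' (rmul_w h' (pD (pmono (x @ y)))))))"
  have gh: "g' @ LD x # LD y # h' = g @ h" using gx hy by simp
  have "pmono (g @ h) \<in> V" using g h by (intro KXD_pmono frakS_append) (auto simp: goodS_def)
  moreover have "S \<in> red (m + n)" unfolding S_def using A B C by (intro red_add red_smul)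
  moreover have "psub (pmono (g @ h)) S \<in> I"
    unfolding S_def gh[symmetric] using gx hy by (intro DD_reduction) (auto simp: goodS_def)
  ultimately show ?thesis by (rule red_I)
qed

text \<open>Products of two good words reduce: either the product is good, or the junction is a
  pair of D-letters and red_mul_DD applies.\<close>

lemma red_mul_good:
  assumes IH: "\<And>m' n' p q. m' + n' < m + n \<Longrightarrow> p \<in> red m' \<Longrightarrow> q \<in> red n' \<Longrightarrow> pmul p q \<in> red (m' + n')"
    and g: "g \<in> goodS X" "ddeg g \<le> m" and h: "h \<in> goodS X" "ddeg h \<le> n"
  shows "pmono (g @ h) \<in> red (m + n)"
proof (cases "isD (last g) \<and> isD (hd h)")
  case False
  then have "g @ h \<in> goodS X" using g h by (intro goodS_append) auto
  then show ?thesis using g h by (intro red_good) auto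
next
  case True
  obtain g' x where gx: "g = g' @ [LD x]" "x \<in> goodS X" "g' = [] \<or> (g' \<in> goodS X \<and> \<not> isD (last g'))"
    using good_split_last[OF g(1)] True by blast
  obtain y h' where hy: "h = LD y # h'" "y \<in> goodS X" "h' = [] \<or> (h' \<in> goodS X \<and> \<not> isD (hd h'))"
    using good_split_first[OF h(1)] True by blast
  show ?thesis by (rule red_mul_DD[OF IH gx hy g h])
qed

lemma red_mul_span:
  assumes IH: "\<And>m' n' p q. m' + n' < m + n \<Longrightarrow> p \<in> red m' \<Longrightarrow> q \<in> red n' \<Longrightarrow> pmul p q \<in> red (m' + n')"
    and ps: "\<forall>(w,k)\<in>set ps. w \<in> goodS X \<and> ddeg w \<le> m" and qs: "\<forall>(w,k)\<in>set qs. w \<in> goodS X \<and> ddeg w \<le> n"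
  shows "pmul (plist ps) (plist qs) \<in> red (m + n)"
  using ps
proof (induction ps rule: plist.induct)
  case 1 then show ?case by (simp add: red_zero)
next
  case (2 w k ps)
  have "pmul (pmono w) (plist qs) \<in> red (m + n)"
    using qs
  proof (induction qs rule: plist.induct)
    case 1 then show ?case by (simp add: red_zero)
  next
    case (2 w' k' qs)
    then show ?case using red_mul_good[OF IH, where g = w and h = w'] "2.prems" \<open>\<forall>(w,k)\<in>set ((w, k) # ps). w \<in> goodS X \<and> ddeg w \<le> m\<close>
      by (auto simp: pmul_padd_right pmul_psmul_right intro!: red_add red_smul)
  qed
  then show ?case using 2 by (auto simp: pmul_padd_left pmul_psmul_left intro!: red_add red_smul)
qed

text \<open>The reducible polynomials are closed under products, with degrees adding up: by
  induction on the total degree, replacing both factors by their spanning combinations.\<close>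

lemma red_mul: "p \<in> red m \<Longrightarrow> q \<in> red n \<Longrightarrow> pmul p q \<in> red (m + n)"
proof (induction "m + n" arbitrary: m n p q rule: less_induct)
  case less
  obtain ps where p: "p \<in> V" "\<forall>(w,k)\<in>set ps. w \<in> goodS X \<and> ddeg w \<le> m" "psub p (plist ps) \<in> I"
    using less.prems(1) by (auto simp: red_def good_comb_def)
  obtain qs where q: "q \<in> V" "\<forall>(w,k)\<in>set qs. w \<in> goodS X \<and> ddeg w \<le> n" "psub q (plist qs) \<in> I"
    using less.prems(2) by (auto simp: red_def good_comb_def)
  have sV: "plist ps \<in> V" "plist qs \<in> V" using p q by (auto intro!: plist_KXD simp: goodS_def)
  have span: "pmul (plist ps) (plist qs) \<in> red (m + n)"
    using less.hyps p q by (intro red_mul_span) auto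
  have "psub (pmul p q) (pmul (plist ps) (plist qs)) =
        padd (pmul (psub p (plist ps)) q) (pmul (plist ps) (psub q (plist qs)))"
    by (simp add: pmul_psub_left pmul_psub_right) (simp add: fun_eq_iff psub_def padd_def)
  moreover have "padd (pmul (psub p (plist ps)) q) (pmul (plist ps) (psub q (plist qs))) \<in> I"
    using p q sV by (intro IdT_add IdT_rmul IdT_lmul) auto
  ultimately have D: "psub (pmul p q) (pmul (plist ps) (plist qs)) \<in> I" by simp
  have VV: "pmul p q \<in> V" using p q by (simp add: KXD_pmul)
  show ?case by (rule red_I[OF VV span D])
qed

lemma red_word: "w \<in> frakS X \<Longrightarrow> pmono w \<in> red (ddeg w)"
proof (induction w rule: frakS_induct)
  case (gen x)
  then have "[Lx x] \<in> goodS X" by (simp add: goodS_def frakS_def)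
  then show ?case by (intro red_good) auto
next
  case (bracket u)
  have "pD (pmono u) \<in> red (Suc (ddeg u))" using bracket(2) by (rule red_D)
  then show ?case by simp
next
  case (cons a v)
  then have "pmul (pmono [a]) (pmono v) \<in> red (ddeg [a] + ddeg v)" by (intro red_mul)
  then show ?case by simp
qed

lemma red_poly: "p \<in> V \<Longrightarrow> \<exists>n. p \<in> red n"
proof (induction p rule: poly_induct)
  case zero then show ?case using red_zero by blast
next
  case (step k w q)
  then obtain n where n: "q \<in> red n" by blast
  have "pmono w \<in> red (ddeg w)" using step by (simp add: red_word)
  then have "pmono w \<in> red (max n (ddeg w))" by (rule red_mono[rotated]) auto
  then have "psmul k (pmono w) \<in> red (max n (ddeg w))" by (rule red_smul)
  moreover have "q \<in> red (max n (ddeg w))" using n by (rule red_mono[rotated]) auto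
  ultimately have "padd (psmul k (pmono w)) q \<in> red (max n (ddeg w))" by (rule red_add)
  then show ?case by blast
qed

lemma spanning: "p \<in> V \<Longrightarrow> \<exists>ps. fst ` set ps \<subseteq> goodS X \<and> psub p (plist ps) \<in> I"
proof -
  assume "p \<in> V"
  then obtain n where "p \<in> red n" using red_poly by blast
  then obtain ps where "\<forall>(w,k)\<in>set ps. w \<in> goodS X \<and> ddeg w \<le> n" "psub p (plist ps) \<in> I"
    by (auto simp: red_def good_comb_def)
  then show ?thesis by (intro exI[of _ ps]) auto
qed

end

section \<open>A model for linear independence\<close>

definition shift_w :: "('x \<times> nat) list \<Rightarrow> ('x \<times> nat) list" where
  "shift_w m = map (\<lambda>(x,n). (x, Suc n)) m"
definition unshift_w :: "('x \<times> nat) list \<Rightarrow> ('x \<times> nat) list" where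
  "unshift_w m = map (\<lambda>(x,n). (x, n - 1)) m"
definition allpos :: "('x \<times> nat) list \<Rightarrow> bool" where
  "allpos m = (\<forall>(x,n)\<in>set m. 0 < n)"
definition shift_fn :: "(('x \<times> nat) list \<Rightarrow> 'k::zero) \<Rightarrow> ('x \<times> nat) list \<Rightarrow> 'k" where
  "shift_fn p w = (if allpos w then p (unshift_w w) else 0)"
definition weight :: "('x \<times> nat) list \<Rightarrow> nat" where
  "weight m = sum_list (map snd m)"

lemma allpos_shift_w[simp]: "allpos (shift_w m)" by (auto simp: allpos_def shift_w_def)
lemma unshift_shift_w[simp]: "unshift_w (shift_w m) = m" by (induction m) (auto simp: unshift_w_def shift_w_def)
lemma shift_unshift_w: "allpos w \<Longrightarrow> shift_w (unshift_w w) = w" by (induction w) (auto simp: unshift_w_def shift_w_def allpos_def)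
lemma shift_fn_shift_w[simp]: "shift_fn p (shift_w m) = p m" by (simp add: shift_fn_def)
lemma shift_fn_nz: "shift_fn p w \<noteq> 0 \<Longrightarrow> \<exists>m. w = shift_w m \<and> p m \<noteq> 0"
  by (auto simp: shift_fn_def shift_unshift_w split: if_splits intro: exI[of _ "unshift_w w"])
lemma length_shift_w[simp]: "length (shift_w m) = length m" by (simp add: shift_w_def)
lemma weight_shift_w: "weight (shift_w m) = weight m + length m" by (induction m) (auto simp: shift_w_def weight_def)
lemma weight_append[simp]: "weight (u @ v) = weight u + weight v" by (simp add: weight_def)
lemma shift_w_inj: "shift_w a = shift_w b \<Longrightarrow> a = b"
proof -
  assume "shift_w a = shift_w b"
  then have "unshift_w (shift_w a) = unshift_w (shift_w b)" by simp
  then show ?thesis by simp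
qed

lemma allpos_append[simp]: "allpos (u @ v) \<longleftrightarrow> allpos u \<and> allpos v"
  by (auto simp: allpos_def)

lemma shift_fn_cmul: "shift_fn (cmul p q) = cmul (shift_fn p) (shift_fn q)"
proof
  fix w
  show "shift_fn (cmul p q) w = cmul (shift_fn p) (shift_fn q) w"
  proof (cases "allpos w")
    case True
    have "shift_fn (cmul p q) w = (\<Sum>i\<in>{0..length (unshift_w w)}. p (take i (unshift_w w)) * q (drop i (unshift_w w)))"
      using True by (simp add: shift_fn_def cmul_def)
    also have "\<dots> = (\<Sum>i\<in>{0..length w}. shift_fn p (take i w) * shift_fn q (drop i w))"
    proof (rule sum.cong)
      show "{0..length (unshift_w w)} = {0..length w}" by (simp add: unshift_w_def)
    next
      fix i assume "i \<in> {0..length w}"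
      have a: "allpos (take i w)" "allpos (drop i w)" using True
        by (metis allpos_append append_take_drop_id)+
      show "p (take i (unshift_w w)) * q (drop i (unshift_w w)) = shift_fn p (take i w) * shift_fn q (drop i w)"
        using a by (simp add: shift_fn_def unshift_w_def take_map drop_map)
    qed
    finally show ?thesis by (simp add: cmul_def)
  next
    case False
    have "\<forall>i. shift_fn p (take i w) * shift_fn q (drop i w) = 0"
    proof
      fix i
      have "\<not> allpos (take i w) \<or> \<not> allpos (drop i w)" using False
        by (metis allpos_append append_take_drop_id)
      then show "shift_fn p (take i w) * shift_fn q (drop i w) = 0" by (auto simp: shift_fn_def)
    qed
    then show ?thesis using False by (simp add: shift_fn_def cmul_def)
  qed
qed

definition sder :: "'k::comm_ring_1 \<Rightarrow> (('x \<times> nat) list \<Rightarrow> 'k) \<Rightarrow> ('x \<times> nat) list \<Rightarrow> 'k" where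
  "sder mu p = (\<lambda>w. mu * (shift_fn p w - p w))"

lemma sder_supp: "sder mu p w \<noteq> 0 \<Longrightarrow> p w \<noteq> 0 \<or> (\<exists>m. w = shift_w m \<and> p m \<noteq> 0)"
  by (cases "shift_fn p w = 0") (auto simp: sder_def dest: shift_fn_nz)

text \<open>For a multiplicative map s and D = mu (s - id) with lam mu = 1, the lambda-Leibniz
  rule holds; this is the identity on coefficients behind it.\<close>

lemma leibniz_coeff_identity:
  assumes inv: "lam * mu = (1::'k::comm_ring_1)"
  shows "mu * (a' * b' - a * b) = mu * (a' - a) * b + a * (mu * (b' - b)) + lam * (mu * (a' - a) * (mu * (b' - b)))"
proof -
  have "lam * (mu * (a' - a) * (mu * (b' - b))) = (lam * mu) * (mu * ((a' - a) * (b' - b)))"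
    by (simp add: algebra_simps)
  then show ?thesis using inv by (simp add: algebra_simps)
qed

lemma sder_cmul:
  fixes a b :: "('x \<times> nat) list \<Rightarrow> 'k::comm_ring_1"
  assumes inv: "lam * mu = (1::'k::comm_ring_1)"
  shows "sder mu (cmul a b) = (\<lambda>w. cmul (sder mu a) b w + cmul a (sder mu b) w + lam * cmul (sder mu a) (sder mu b) w)"
proof
  fix w :: "('x \<times> nat) list"
  let ?S = "{0..length w}"
  have "sder mu (cmul a b) w = mu * (cmul (shift_fn a) (shift_fn b) w - cmul a b w)"
    by (simp add: sder_def shift_fn_cmul)
  also have "\<dots> = (\<Sum>i\<in>?S. mu * (shift_fn a (take i w) * shift_fn b (drop i w) - a (take i w) * b (drop i w)))"
    by (simp add: cmul_def sum_subtractf[symmetric] sum_distrib_left)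
  also have "\<dots> = (\<Sum>i\<in>?S. mu * (shift_fn a (take i w) - a (take i w)) * b (drop i w)
      + a (take i w) * (mu * (shift_fn b (drop i w) - b (drop i w)))
      + lam * (mu * (shift_fn a (take i w) - a (take i w)) * (mu * (shift_fn b (drop i w) - b (drop i w)))))"
    by (rule sum.cong) (auto simp: leibniz_coeff_identity[OF inv])
  also have "\<dots> = cmul (sder mu a) b w + cmul a (sder mu b) w + lam * cmul (sder mu a) (sder mu b) w"
    by (simp add: sder_def cmul_def sum.distrib sum_distrib_left)
  finally show "sder mu (cmul a b) w = cmul (sder mu a) b w + cmul a (sder mu b) w + lam * cmul (sder mu a) (sder mu b) w" .
qed

text \<open>The model: finitely supported functions on words over X x nat (the letter (x, n)
  standing for the n-th shift of x), with convolution and D = mu (shift - id).\<close>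

definition shift_alg :: "'k::comm_ring_1 \<Rightarrow> ('k, ('x \<times> nat) list \<Rightarrow> 'k) kdalg" where
  "shift_alg mu = \<lparr> carrier = {p. finite {w. p w \<noteq> 0}}, add = (\<lambda>p q w. p w + q w), zero = (\<lambda>w. 0),
     mult = cmul, smul = (\<lambda>k p w. k * p w), der = sder mu \<rparr>"

lemma shift_alg_simps[simp]: "carrier (shift_alg mu) = {p. finite {w. p w \<noteq> 0}}" "add (shift_alg mu) = (\<lambda>p q w. p w + q w)"
  "zero (shift_alg mu) = (\<lambda>w. 0)" "mult (shift_alg mu) = cmul" "smul (shift_alg mu) = (\<lambda>k p w. k * p w)"
  "der (shift_alg mu) = sder mu"
  by (simp_all add: shift_alg_def)

lemma fin_add: "finite {w. p w \<noteq> 0} \<Longrightarrow> finite {w. q w \<noteq> 0} \<Longrightarrow> finite {w. p w + q w \<noteq> (0::'k::comm_ring_1)}"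
proof -
  assume a: "finite {w. p w \<noteq> 0}" "finite {w. q w \<noteq> 0}"
  have "{w. p w + q w \<noteq> 0} \<subseteq> {w. p w \<noteq> 0} \<union> {w. q w \<noteq> 0}" by auto
  then show ?thesis using a by (auto elim: finite_subset)
qed
lemma fin_smul: "finite {w. p w \<noteq> 0} \<Longrightarrow> finite {w. k * p w \<noteq> (0::'k::comm_ring_1)}"
proof -
  assume a: "finite {w. p w \<noteq> 0}"
  have "{w. k * p w \<noteq> 0} \<subseteq> {w. p w \<noteq> 0}" by auto
  then show ?thesis using a by (auto elim: finite_subset)
qed
lemma shift_alg_kalgebra: "kalgebra (shift_alg (mu::'k::comm_ring_1) :: ('k, ('x \<times> nat) list \<Rightarrow> 'k) kdalg)"
  unfolding kalgebra_def shift_alg_simps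
proof (intro conjI ballI allI)
  fix a b :: "('x \<times> nat) list \<Rightarrow> 'k"
  assume "a \<in> {p. finite {w. p w \<noteq> 0}}" "b \<in> {p. finite {w. p w \<noteq> 0}}"
  then show "(\<lambda>w. a w + b w) \<in> {p. finite {w. p w \<noteq> 0}}" "cmul a b \<in> {p. finite {w. p w \<noteq> 0}}"
    by (auto intro: fin_add cmul_finite)
  show "(\<lambda>w. a w + b w) = (\<lambda>w. b w + a w)" by (simp add: add.commute)
next
  fix k and a :: "('x \<times> nat) list \<Rightarrow> 'k" assume "a \<in> {p. finite {w. p w \<noteq> 0}}"
  then show "(\<lambda>w. k * a w) \<in> {p. finite {w. p w \<noteq> 0}}" by (auto intro: fin_smul)
next
  fix a :: "('x \<times> nat) list \<Rightarrow> 'k" assume a: "a \<in> {p. finite {w. p w \<noteq> 0}}"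
  show "\<exists>b\<in>{p. finite {w. p w \<noteq> 0}}. (\<lambda>w. a w + b w) = (\<lambda>w. 0)"
    using a by (intro bexI[of _ "\<lambda>w. - a w"]) auto
qed (auto simp: cmul_assoc cmul_add_left cmul_add_right cmul_smul_left cmul_smul_right
               algebra_simps fun_eq_iff)

lemma fin_der: "finite {w. p w \<noteq> 0} \<Longrightarrow> finite {w. sder mu p w \<noteq> (0::'k::comm_ring_1)}"
proof -
  assume a: "finite {w. p w \<noteq> 0}"
  have "{w. sder mu p w \<noteq> 0} \<subseteq> {w. p w \<noteq> 0} \<union> shift_w ` {w. p w \<noteq> 0}"
    by (auto dest: sder_supp)
  then show ?thesis using a by (auto elim: finite_subset)
qed

lemma shift_alg_lda:
  assumes inv: "lam * mu = (1::'k::comm_ring_1)"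
  shows "lambda_diff_alg lam (shift_alg mu :: ('k, ('x \<times> nat) list \<Rightarrow> 'k) kdalg)"
  unfolding lambda_diff_alg_def
proof (intro conjI ballI allI shift_alg_kalgebra)
  fix a :: "('x \<times> nat) list \<Rightarrow> 'k" assume "a \<in> carrier (shift_alg mu)"
  then show "der (shift_alg mu) a \<in> carrier (shift_alg mu)" by (auto intro: fin_der)
next
  fix k and a b :: "('x \<times> nat) list \<Rightarrow> 'k"
  show "der (shift_alg mu) (smul (shift_alg mu) k a) = smul (shift_alg mu) k (der (shift_alg mu) a)"
    "der (shift_alg mu) (add (shift_alg mu) a b) = add (shift_alg mu) (der (shift_alg mu) a) (der (shift_alg mu) b)"
    by (simp_all add: sder_def shift_fn_def fun_eq_iff algebra_simps)
  show "der (shift_alg mu) (mult (shift_alg mu) a b) =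
      add (shift_alg mu) (add (shift_alg mu) (mult (shift_alg mu) (der (shift_alg mu) a) b)
        (mult (shift_alg mu) a (der (shift_alg mu) b)))
        (smul (shift_alg mu) lam (mult (shift_alg mu) (der (shift_alg mu) a) (der (shift_alg mu) b)))"
    by (simp add: sder_cmul[OF inv])
qed

fun lead_l :: "'x letter \<Rightarrow> ('x \<times> nat) list" where
  "lead_l (Lx x) = [(x, 0)]"
| "lead_l (LD w) = shift_w (concat (map lead_l w))"

definition lead_w :: "'x letter list \<Rightarrow> ('x \<times> nat) list" where
  "lead_w w = concat (map lead_l w)"

lemma lead_l_LD: "lead_l (LD w) = shift_w (lead_w w)" by (simp add: lead_w_def)
declare lead_l.simps(2)[simp del]
lemma lead_w_simps[simp]: "lead_w [] = []" "lead_w (a # w) = lead_l a @ lead_w w" by (simp_all add: lead_w_def)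

fun len_l :: "'x letter \<Rightarrow> nat" where
  "len_l (Lx x) = 1"
| "len_l (LD w) = sum_list (map len_l w)"

definition len_w :: "'x letter list \<Rightarrow> nat" where
  "len_w w = sum_list (map len_l w)"
lemma len_l_LD: "len_l (LD w) = len_w w" by (simp add: len_w_def)
declare len_l.simps(2)[simp del]
lemma len_w_simps[simp]: "len_w [] = 0" "len_w (a # w) = len_l a + len_w w" by (simp_all add: len_w_def)

definition leads :: "(('x \<times> nat) list \<Rightarrow> 'k::comm_ring_1) \<Rightarrow> ('x \<times> nat) list \<Rightarrow> 'k \<Rightarrow> nat \<Rightarrow> bool" where
  "leads p m c L \<longleftrightarrow> p m = c \<and> length m = L \<and> (\<forall>m'. p m' \<noteq> 0 \<longrightarrow> length m' = L)
     \<and> (\<forall>m'. p m' \<noteq> 0 \<longrightarrow> m' \<noteq> m \<longrightarrow> weight m' < weight m)"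

lemma leads_le: "leads p m c L \<Longrightarrow> p m' \<noteq> 0 \<Longrightarrow> weight m' \<le> weight m"
  unfolding leads_def by (cases "m' = m") auto

text \<open>In a product of functions supported on monomials of lengths L1 and L2, the value
  at m1 @ m2 (with length m1 = L1) comes from the single splitting at position L1.\<close>

lemma leads_cmul_value:
  assumes p: "leads p m1 c1 L1" and q: "leads q m2 c2 L2"
  shows "cmul p q (m1 @ m2) = c1 * c2"
proof -
  have l1: "length m1 = L1" using p by (simp add: leads_def)
  let ?f = "\<lambda>i. p (take i (m1 @ m2)) * q (drop i (m1 @ m2))"
  have z: "\<forall>i\<in>{0..length (m1 @ m2)} - {length m1}. ?f i = 0"
  proof
    fix i assume i: "i \<in> {0..length (m1 @ m2)} - {length m1}"
    show "?f i = 0"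
    proof (rule ccontr)
      assume "?f i \<noteq> 0"
      then have "p (take i (m1 @ m2)) \<noteq> 0" by auto
      then have "length (take i (m1 @ m2)) = L1" using p by (auto simp: leads_def)
      then show False using i l1 by auto
    qed
  qed
  have "cmul p q (m1 @ m2) = (\<Sum>i\<in>{0..length (m1 @ m2)}. ?f i)" by (simp add: cmul_def)
  also have "\<dots> = ?f (length m1) + (\<Sum>i\<in>{0..length (m1 @ m2)} - {length m1}. ?f i)"
    by (rule sum.remove) auto
  also have "(\<Sum>i\<in>{0..length (m1 @ m2)} - {length m1}. ?f i) = 0"
    using z by (intro sum.neutral) blast
  also have "?f (length m1) + 0 = ?f (length m1)" by simp
  also have "\<dots> = c1 * c2" using p q by (simp add: leads_def)
  finally show ?thesis .
qed

lemma leads_cmul: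
  assumes p: "leads p m1 c1 L1" and q: "leads q m2 c2 L2"
  shows "leads (cmul p q) (m1 @ m2) (c1 * c2) (L1 + L2)"
proof -
  have l1: "length m1 = L1" and l2: "length m2 = L2" using p q by (auto simp: leads_def)
  have val: "cmul p q (m1 @ m2) = c1 * c2" by (rule leads_cmul_value[OF p q])
  have len: "\<forall>m'. cmul p q m' \<noteq> 0 \<longrightarrow> length m' = L1 + L2"
    using p q by (auto dest!: cmul_supp simp: leads_def)
  have wtc: "\<forall>m'. cmul p q m' \<noteq> 0 \<longrightarrow> m' \<noteq> m1 @ m2 \<longrightarrow> weight m' < weight (m1 @ m2)"
  proof (intro allI impI)
    fix m' assume nz: "cmul p q m' \<noteq> 0" and ne: "m' \<noteq> m1 @ m2"
    then obtain u v where uv: "m' = u @ v" "p u \<noteq> 0" "q v \<noteq> 0" by (auto dest!: cmul_supp)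
    have a: "weight u \<le> weight m1" "weight v \<le> weight m2" using uv leads_le p q by blast+
    have "u \<noteq> m1 \<or> v \<noteq> m2" using ne uv by auto
    then have "weight u < weight m1 \<or> weight v < weight m2" using uv p q by (auto simp: leads_def)
    then show "weight m' < weight (m1 @ m2)" using a uv by auto
  qed
  show ?thesis using val len wtc l1 l2 by (simp add: leads_def)
qed

text \<open>D shifts the leading monomial (its shift beats every unshifted monomial, whose
  weight is smaller by L) and multiplies the leading coefficient by mu.\<close>

lemma leads_der:
  assumes p: "leads p m c L" and L: "L \<ge> 1"
  shows "leads (sder mu p) (shift_w m) (mu * c) L"
proof -
  have len_m: "length m = L" using p by (simp add: leads_def)
  have "p (shift_w m) = 0"
  proof (rule ccontr)
    assume "p (shift_w m) \<noteq> 0"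
    then have "weight (shift_w m) \<le> weight m" using leads_le[OF p] by blast
    then show False using L len_m by (simp add: weight_shift_w)
  qed
  then have val: "sder mu p (shift_w m) = mu * c" using p by (simp add: sder_def leads_def)
  have supp: "length m' = L \<and> (m' \<noteq> shift_w m \<longrightarrow> weight m' < weight (shift_w m))"
    if "sder mu p m' \<noteq> 0" for m'
    using sder_supp[OF that]
  proof
    assume pm: "p m' \<noteq> 0"
    have "weight m' \<le> weight m" by (rule leads_le[OF p pm])
    moreover have "length m' = L" using p pm by (simp add: leads_def)
    ultimately show ?thesis using L len_m by (simp add: weight_shift_w)
  next
    assume "\<exists>m0. m' = shift_w m0 \<and> p m0 \<noteq> 0"
    then obtain m0 where m0: "m' = shift_w m0" "p m0 \<noteq> 0" by blast
    then have "m0 \<noteq> m \<longrightarrow> weight m0 < weight m" "length m0 = L" using p by (auto simp: leads_def)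
    then show ?thesis using m0 len_m by (auto simp: weight_shift_w)
  qed
  show ?thesis using val supp len_m by (simp add: leads_def)
qed

lemma leads_mono: "leads (cmono [(x, 0)] :: ('x \<times> nat) list \<Rightarrow> 'k::comm_ring_1) [(x, 0)] 1 1"
  by (auto simp: leads_def cmono_def split: if_splits)

locale shift_model =
  fixes X :: "'x set" and mu :: "'k::comm_ring_1"
begin

abbreviation "M \<equiv> (shift_alg mu :: ('k, ('x \<times> nat) list \<Rightarrow> 'k) kdalg)"
abbreviation "fm \<equiv> (\<lambda>x. cmono [(x, 0)] :: ('x \<times> nat) list \<Rightarrow> 'k)"

lemma eval_word_leads:
  "w \<in> frakS X \<Longrightarrow> leads (eval_w M fm w) (lead_w w) (mu ^ ddeg w) (len_w w) \<and> len_w w \<ge> 1"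
proof (induction w rule: frakS_induct)
  case (gen x) then show ?case using leads_mono by simp
next
  case (bracket u)
  then have "leads (sder mu (eval_w M fm u)) (shift_w (lead_w u)) (mu * mu ^ ddeg u) (len_w u)"
    by (intro leads_der) auto
  then show ?case using bracket by (simp add: lead_l_LD len_l_LD)
next
  case (cons a v)
  then have "v \<noteq> []" by (auto simp: frakS_def)
  moreover have "leads (cmul (eval_w M fm [a]) (eval_w M fm v)) (lead_w [a] @ lead_w v)
      (mu ^ ddeg [a] * mu ^ ddeg v) (len_w [a] + len_w v)"
    using cons by (intro leads_cmul) auto
  ultimately show ?case using cons by (simp add: eval_w_Cons power_add)
qed

end

lemma lead_l_ne: "wfl X a \<Longrightarrow> lead_l a \<noteq> []"
proof (induction a)
  case (Lx x) then show ?case by simp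
next
  case (LD w) then show ?case by (cases w) (auto simp: lead_l_LD shift_w_def)
qed

lemma lead_w_hd_pos: "wfl X a \<Longrightarrow> 0 < snd (hd (lead_w (a # v))) \<longleftrightarrow> isD a"
proof (cases a)
  case (LD z)
  assume "wfl X a"
  then have "lead_l a \<noteq> []" by (rule lead_l_ne)
  then show ?thesis using LD by (cases "lead_l a") (auto simp: lead_l_LD allpos_def shift_w_def)
qed simp

text \<open>In a good word D(z) u', the word u' is empty or starts with a generator, so the
  leading monomial splits as the shifted monomial of z (all indices positive) followed by
  that of u' (starting with index 0).\<close>

lemma lead_w_LD_Cons:
  assumes "goodw (LD z # u')"
  shows "takeWhile (\<lambda>(x,n). 0 < n) (lead_w (LD z # u')) = shift_w (lead_w z)"
    and "dropWhile (\<lambda>(x,n). 0 < n) (lead_w (LD z # u')) = lead_w u'"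
proof -
  have "u' = [] \<or> (\<exists>x u''. u' = Lx x # u'')"
    using assms by (cases u'; cases "hd u'") (auto simp: goodw_Cons)
  moreover have "allpos (shift_w (lead_w z))" by simp
  ultimately show "takeWhile (\<lambda>(x,n). 0 < n) (lead_w (LD z # u')) = shift_w (lead_w z)"
    and "dropWhile (\<lambda>(x,n). 0 < n) (lead_w (LD z # u')) = lead_w u'"
    by (auto simp: lead_l_LD allpos_def takeWhile_append2 dropWhile_append2)
qed

text \<open>Injectivity, by induction on the size: the first letters have the same kind; for
  generators compare and recurse on the tails, for brackets split the monomial as above.\<close>

lemma lead_w_inj:
  "goodw u \<Longrightarrow> goodw v \<Longrightarrow> list_all (wfl X) u \<Longrightarrow> list_all (wfl X) v \<Longrightarrow> lead_w u = lead_w v \<Longrightarrow> u = v"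
proof (induction "sum_list (map size_l u)" arbitrary: u v rule: less_induct)
  case less
  show ?case
  proof (cases u)
    case Nil
    then show ?thesis using less.prems lead_l_ne by (cases v) auto
  next
    case (Cons a u')
    obtain b v' where v: "v = b # v'"
      using less.prems Cons lead_l_ne[of X a] by (cases v) auto
    have kind: "isD a \<longleftrightarrow> isD b"
      using lead_w_hd_pos[of X a u'] lead_w_hd_pos[of X b v'] less.prems(3-5) Cons v by auto
    have tails: "goodw u'" "goodw v'" "list_all (wfl X) u'" "list_all (wfl X) v'"
      using less.prems Cons v by (auto simp: goodw_Cons)
    have smaller: "sum_list (map size_l u') < sum_list (map size_l u)" using Cons size_l_pos[of a] by simp
    consider (gens) x y where "a = Lx x" "b = Lx y" | (brackets) z z' where "a = LD z" "b = LD z'"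
      using kind by (cases a; cases b) auto
    then show ?thesis
    proof cases
      case gens
      then have "x = y" "lead_w u' = lead_w v'" using less.prems(5) Cons v by auto
      then show ?thesis using less.hyps[OF smaller tails] gens Cons v by simp
    next
      case brackets
      have "shift_w (lead_w z) = shift_w (lead_w z')" "lead_w u' = lead_w v'"
        using lead_w_LD_Cons[of z u'] lead_w_LD_Cons[of z' v'] less.prems Cons v brackets by metis+
      then have ez: "lead_w z = lead_w z'" and eu: "lead_w u' = lead_w v'" by (auto dest: shift_w_inj)
      have gz: "goodw z" "goodw z'" "list_all (wfl X) z" "list_all (wfl X) z'"
        using less.prems Cons v brackets by (auto simp: goodw_Cons goodw_def)
      have "sum_list (map size_l z) < sum_list (map size_l u)" using Cons brackets by simp
      then have "z = z'" using less.hyps gz ez by blast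
      moreover have "u' = v'" using less.hyps[OF smaller tails eu] .
      ultimately show ?thesis using Cons v brackets by simp
    qed
  qed
qed

section \<open>Good words are independent modulo Id(T)\<close>

lemma sum_list_single:
  assumes "distinct (map fst ps)" "(w0, k0) \<in> set ps" "\<forall>(w,k)\<in>set ps. w \<noteq> w0 \<longrightarrow> g (w,k) = (0::'a::comm_monoid_add)"
  shows "sum_list (map g ps) = g (w0, k0)"
  using assms
proof (induction ps)
  case Nil then show ?case by simp
next
  case (Cons p ps)
  obtain w k where p: "p = (w, k)" by (cases p)
  show ?case
  proof (cases "w = w0")
    case True
    then have "k = k0" "(w0, k0) \<notin> set ps \<or> True" using Cons.prems p by (auto simp: image_iff)
    moreover have "\<forall>(w',k')\<in>set ps. w' \<noteq> w0" using Cons.prems(1) p True by (auto simp: image_iff)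
    then have "sum_list (map g ps) = 0" using Cons.prems(3) by (induction ps) auto
    ultimately show ?thesis using p True by simp
  next
    case False
    then have "(w0, k0) \<in> set ps" using Cons.prems p by auto
    then have "sum_list (map g ps) = g (w0, k0)" using Cons by auto
    then show ?thesis using p False Cons.prems(3) by simp
  qed
qed

text \<open>Functions with pairwise distinct leading monomials are linearly independent, provided
  their leading coefficients c w are not zero divisors for the coefficients: in a vanishing
  combination, look at the maximal leading monomial among the terms with nonzero coefficient;
  no other term contributes to it.\<close>

lemma leads_independent:
  fixes F :: "'w \<Rightarrow> ('x \<times> nat) list \<Rightarrow> 'k::comm_ring_1"
  assumes d: "distinct (map fst ps)"
    and lead: "\<And>w k. (w, k) \<in> set ps \<Longrightarrow> leads (F w) (LM w) (c w) (L w)"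
    and inj: "inj_on LM (fst ` set ps)"
    and cancel: "\<And>w k. (w, k) \<in> set ps \<Longrightarrow> k * c w = 0 \<Longrightarrow> k = 0"
    and zero: "\<And>m. sum_list (map (\<lambda>(w,k). k * F w m) ps) = 0"
  shows "\<forall>(w,k)\<in>set ps. k = 0"
proof (rule ccontr)
  let ?S = "{p \<in> set ps. snd p \<noteq> 0}"
  let ?f = "\<lambda>p. weight (LM (fst p))"
  assume "\<not> (\<forall>(w,k)\<in>set ps. k = 0)"
  then have "?S \<noteq> {}" by auto
  then have "Max (?f ` ?S) \<in> ?f ` ?S" by (intro Max_in) auto
  then obtain p0 where "p0 \<in> ?S" "?f p0 = Max (?f ` ?S)" by auto
  moreover obtain w0 k0 where "p0 = (w0, k0)" by (cases p0)
  ultimately have p0: "(w0, k0) \<in> ?S" "\<forall>p\<in>?S. ?f p \<le> ?f (w0, k0)" by auto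
  let ?m0 = "LM w0"
  have others: "\<forall>(w,k)\<in>set ps. w \<noteq> w0 \<longrightarrow> k * F w ?m0 = 0"
  proof (intro ballI impI, clarify)
    fix w k assume wk: "(w, k) \<in> set ps" "w \<noteq> w0"
    show "k * F w ?m0 = 0"
    proof (rule ccontr)
      assume "k * F w ?m0 \<noteq> 0"
      then have k: "k \<noteq> 0" and e: "F w ?m0 \<noteq> 0" by auto
      have "w0 \<in> fst ` set ps" "w \<in> fst ` set ps" using p0 wk by force+
      then have "?m0 \<noteq> LM w" using inj wk(2) by (auto dest: inj_onD)
      then have "weight ?m0 < weight (LM w)" using lead[OF wk(1)] e by (auto simp: leads_def)
      moreover have "weight (LM w) \<le> weight ?m0" using p0 wk k by force
      ultimately show False by simp
    qed
  qed
  have "sum_list (map (\<lambda>(w,k). k * F w ?m0) ps) = k0 * F w0 ?m0"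
    using sum_list_single[OF d, of w0 k0 "\<lambda>(w,k). k * F w ?m0"] p0 others by auto
  then have "k0 * c w0 = 0" using zero lead[of w0 k0] p0 by (simp add: leads_def)
  then show False using cancel[of w0 k0] p0 by simp
qed

context shift_model
begin

lemma fm_c: "finite {w. fm x w \<noteq> 0}"
proof -
  have "{w. fm x w \<noteq> 0} \<subseteq> {[(x,0)]}" by (auto simp: cmono_def split: if_splits)
  then show ?thesis by (rule finite_subset) simp
qed

text \<open>Evaluating a combination of good words in the model and applying leads_independent:
  the leading coefficients mu^d are units, and leading monomials of good words are distinct.\<close>

lemma good_independent:
  assumes inv: "lam * mu = 1" and d: "distinct (map fst ps)" and g: "fst ` set ps \<subseteq> goodS X"
    and I: "plist ps \<in> IdT X (Tset X mu)"
  shows "\<forall>(w,k)\<in>set ps. k = 0"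
proof -
  interpret u: evaluation M lam fm X mu
    by unfold_locales (auto simp: shift_alg_lda[OF inv] inv fm_c)
  have fS: "fst ` set ps \<subseteq> frakS X" using g by (auto simp: goodS_def)
  have eval_plist: "u.eval_p (plist qs) = (\<lambda>m. sum_list (map (\<lambda>(w,k). k * eval_w M fm w m) qs))"
    if "fst ` set qs \<subseteq> frakS X" for qs
    using that
  proof (induction qs rule: plist.induct)
    case 1 then show ?case by (simp add: u.eval_p_zero)
  next
    case (2 w k qs)
    then have "plist qs \<in> KXD X" "w \<in> frakS X" by (auto intro: plist_KXD)
    then show ?case using 2 by (simp add: u.eval_p_add u.eval_p_smul u.eval_p_mono KXD_closed)
  qed
  show ?thesis
  proof (rule leads_independent[OF d])
    fix w k assume "(w, k) \<in> set ps"
    then show "leads (eval_w M fm w) (lead_w w) (mu ^ ddeg w) (len_w w)"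
      using fS eval_word_leads by auto
  next
    show "inj_on lead_w (fst ` set ps)"
      using g by (intro inj_onI lead_w_inj) (auto simp: goodS_def frakS_def)
  next
    fix w k assume "k * mu ^ ddeg w = 0"
    then have "k * mu ^ ddeg w * lam ^ ddeg w = 0" by simp
    then have "k * (lam * mu) ^ ddeg w = 0" by (simp add: power_mult_distrib algebra_simps)
    then show "k = 0" using inv by simp
  next
    fix m show "sum_list (map (\<lambda>(w,k). k * eval_w M fm w m) ps) = 0"
      using eval_plist[OF fS] u.eval_p_IdT[OF I] by (metis shift_alg_simps(3))
  qed
qed

end

context diff_quotient
begin

lemma lincomb_C: "fst ` set ps \<subseteq> frakS X \<Longrightarrow> lincomb Q (\<lambda>w. C (pmono w)) ps = C (plist ps)"
proof (induction ps rule: plist.induct)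
  case 1 then show ?case by (simp add: lincomb_def Q_ops)
next
  case (2 w k ps)
  then have "plist ps \<in> KXD X" "w \<in> frakS X" by (auto intro: plist_KXD)
  then show ?case using 2 by (simp add: lincomb_def Q_ops KXD_closed)
qed

end

lemma Phi_spans:
  assumes inv: "lam * mu = 1" and a: "a \<in> carrier (KXDT X mu)"
  shows "\<exists>ps. set (map fst ps) \<subseteq> Phi X \<and> a = lincomb (KXDT X mu) (\<lambda>w. cls X (IdT X (Tset X mu)) (pmono w)) ps"
proof -
  interpret q: diff_quotient X "IdT X (Tset X mu)" lam by (rule diff_quotient_IdT[OF inv])
  interpret s: reduction X mu .
  obtain p where p: "p \<in> KXD X" "a = q.C p" using a by (auto simp: KXDT_def q.Q_carrier)
  obtain ps where ps: "fst ` set ps \<subseteq> goodS X" "psub p (plist ps) \<in> s.I"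
    using s.spanning[OF p(1)] by blast
  have fS: "fst ` set ps \<subseteq> frakS X" using ps by (auto simp: goodS_def)
  have "q.C p = q.C (plist ps)" using ps p fS by (simp add: q.cls_eq plist_KXD)
  moreover have "set (map fst ps) \<subseteq> Phi X" using ps(1) by (auto simp: Phi_eq)
  ultimately show ?thesis using p q.lincomb_C[OF fS] unfolding KXDT_def by (intro exI[of _ ps]) auto
qed

lemma Phi_independent:
  assumes inv: "lam * mu = 1" and d: "distinct (map fst ps)" and Phi: "set (map fst ps) \<subseteq> Phi X"
    and zero: "lincomb (KXDT X mu) (\<lambda>w. cls X (IdT X (Tset X mu)) (pmono w)) ps = zero (KXDT X mu)"
  shows "\<forall>(w,k)\<in>set ps. k = 0"
proof -
  interpret q: diff_quotient X "IdT X (Tset X mu)" lam by (rule diff_quotient_IdT[OF inv])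
  interpret m: shift_model X mu .
  have g: "fst ` set ps \<subseteq> goodS X" using Phi Phi_eq by auto
  then have fS: "fst ` set ps \<subseteq> frakS X" by (auto simp: goodS_def)
  have "q.C (plist ps) = q.C pzero" using zero q.lincomb_C[OF fS] by (simp add: KXDT_def q.Q_ops)
  then have "psub (plist ps) pzero \<in> IdT X (Tset X mu)" using fS by (simp add: q.cls_eq plist_KXD)
  moreover have "psub (plist ps) pzero = plist ps" by (simp add: psub_def pzero_def)
  ultimately show ?thesis using m.good_independent[OF inv d g] by simp
qed

theorem theorem5p8:
  fixes X :: "'x set" and lam mu :: "'k::comm_ring_1"
  assumes "lam * mu = 1"
  shows "free_lda TYPE('r) lam (KXDT X mu) X (\<lambda>x. cls X (IdT X (Tset X mu)) (pmono [Lx x]))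
       \<and> is_kbasis (KXDT X mu) (Phi X) (\<lambda>w. cls X (IdT X (Tset X mu)) (pmono w))"
proof
  show "free_lda TYPE('r) lam (KXDT X mu) X (\<lambda>x. cls X (IdT X (Tset X mu)) (pmono [Lx x]))"
    by (rule free_part[OF assms])
  show "is_kbasis (KXDT X mu) (Phi X) (\<lambda>w. cls X (IdT X (Tset X mu)) (pmono w))"
    unfolding is_kbasis_def
  proof (intro conjI ballI allI impI)
    fix w assume "w \<in> Phi X"
    then show "cls X (IdT X (Tset X mu)) (pmono w) \<in> carrier (KXDT X mu)"
      using Phi_eq by (auto simp: KXDT_def quot_def goodS_def intro!: KXD_pmono)
  next
    fix a assume "a \<in> carrier (KXDT X mu)"
    then show "\<exists>ps. set (map fst ps) \<subseteq> Phi X \<and> a = lincomb (KXDT X mu) (\<lambda>w. cls X (IdT X (Tset X mu)) (pmono w)) ps"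
      by (rule Phi_spans[OF assms])
  next
    fix ps :: "('x letter list \<times> 'k) list" and wk :: "'x letter list \<times> 'k"
    assume "distinct (map fst ps) \<and> set (map fst ps) \<subseteq> Phi X
      \<and> lincomb (KXDT X mu) (\<lambda>w. cls X (IdT X (Tset X mu)) (pmono w)) ps = zero (KXDT X mu)"
      and "wk \<in> set ps"
    then show "case wk of (w, k) \<Rightarrow> k = 0" using Phi_independent[OF assms] by blast
  qed
qed

end
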